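(* Let $\mathcal D$ be a finite nonempty set of cardinality $D$. For $n\ge1$ let $p_n$ be the dimension of the space of primitive elements of $\mathcal H^{\mathcal D}_{P,R}$ that are homogeneous of weight $n$, and $P(X)=\sum_np_nX^n$. Then $$P(X)=\frac{1-\sqrt{1-4DX}}{2},\qquad p_n=\frac{(2n-2)!}{n!\,(n-1)!}D^n=D^n\tau_n,$$ where $\tau_n$ is the number of undecorated planar rooted trees with $n$ vertices.
   Context: $\mathcal H^{\mathcal D}_{P,R}$ is the free associative unital $\mathbb Q$-algebra on the set of planar rooted trees (finite trees with a root, embedded in the plane, edges oriented away from the root) decorated by $\mathcal D$; its basis is the set of planar forests $t_1\cdots t_n$ ($1$ = empty forest), graded by weight (total number of vertices). Coproduct: $\Delta(F)=\sum_cP^c(F)\otimes R^c(F)$ over tuples $c=(c_i)$, each $c_i$ the empty cut of $t_i$ ($P=1,R=t_i$), the total cut ($P=t_i,R=1$), or an admissible cut (a nonempty set of edges of $t_i$ such that every oriented path meets at most one of them, with $R^{c_i}(t_i)$ the component of the root and $P^{c_i}(t_i)$ the left-to-right planar forest of the other components); $P^c(F)=\prod P^{c_i}(t_i)$, $R^c(F)=\prod R^{c_i}(t_i)$. An element $x$ is primitive if $\Delta(x)=x\otimes1+1\otimes x$. *)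

theory Defs
  imports "HOL-Analysis.Analysis" "HOL-Library.Poly_Mapping"
begin

datatype 'd ptree = Node 'd "'d ptree list"

text \<open>Planar forests = words of trees; the empty list is the unit (empty forest).\<close>
type_synonym 'd pforest = "'d ptree list"

fun tsize :: "'d ptree \<Rightarrow> nat" where
  "tsize (Node d ts) = Suc (sum_list (map tsize ts))"

definition fweight :: "'d pforest \<Rightarrow> nat" where
  "fweight F = sum_list (map tsize F)"

text \<open>Vertices are addressed by paths from the root (list of child indices).
  Each non-root vertex is identified with the edge entering it.\<close>
fun subtree :: "'d ptree \<Rightarrow> nat list \<Rightarrow> 'd ptree option" where
  "subtree t [] = Some t"
| "subtree (Node d ts) (i # p) = (if i < length ts then subtree (ts ! i) p else None)"

definition verts :: "'d ptree \<Rightarrow> nat list set" where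
  "verts t = {p. subtree t p \<noteq> None}"

text \<open>Admissible cut: a nonempty set of edges (given by their lower vertices) such that
  every oriented path meets at most one of them.\<close>
definition admissible_cut :: "'d ptree \<Rightarrow> nat list set \<Rightarrow> bool" where
  "admissible_cut t S \<longleftrightarrow> S \<noteq> {} \<and> S \<subseteq> verts t - {[]} \<and>
     (\<forall>p r. p \<in> S \<and> p @ r \<in> S \<longrightarrow> r = [])"

text \<open>Root component R and planar forest P of the cut-off components.\<close>
fun cutR :: "'d ptree \<Rightarrow> nat list set \<Rightarrow> 'd ptree"
and cutRs :: "nat \<Rightarrow> 'd ptree list \<Rightarrow> nat list set \<Rightarrow> 'd ptree list" where
  "cutR (Node d ts) S = Node d (cutRs 0 ts S)"
| "cutRs i [] S = []"
| "cutRs i (t # ts) S = (if [i] \<in> S then cutRs (Suc i) ts S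
      else cutR t {p. i # p \<in> S} # cutRs (Suc i) ts S)"

fun cutP :: "'d ptree \<Rightarrow> nat list set \<Rightarrow> 'd pforest"
and cutPs :: "nat \<Rightarrow> 'd ptree list \<Rightarrow> nat list set \<Rightarrow> 'd pforest" where
  "cutP (Node d ts) S = cutPs 0 ts S"
| "cutPs i [] S = []"
| "cutPs i (t # ts) S = (if [i] \<in> S then t # cutPs (Suc i) ts S
      else cutP t {p. i # p \<in> S} @ cutPs (Suc i) ts S)"

datatype cut_choice = EmptyCut | TotalCut | AdmCut "nat list set"

definition valid_cut :: "'d ptree \<Rightarrow> cut_choice \<Rightarrow> bool" where
  "valid_cut t c = (case c of EmptyCut \<Rightarrow> True | TotalCut \<Rightarrow> True
      | AdmCut S \<Rightarrow> admissible_cut t S)"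

definition cutPR :: "'d ptree \<Rightarrow> cut_choice \<Rightarrow> 'd pforest \<times> 'd pforest" where
  "cutPR t c = (case c of EmptyCut \<Rightarrow> ([], [t]) | TotalCut \<Rightarrow> ([t], [])
      | AdmCut S \<Rightarrow> (cutP t S, [cutR t S]))"

definition cut_tuples :: "'d pforest \<Rightarrow> cut_choice list set" where
  "cut_tuples F = {cs. length cs = length F \<and> (\<forall>i<length F. valid_cut (F ! i) (cs ! i))}"

definition Pc :: "'d pforest \<Rightarrow> cut_choice list \<Rightarrow> 'd pforest" where
  "Pc F cs = concat (map (\<lambda>i. fst (cutPR (F ! i) (cs ! i))) [0..<length F])"

definition Rc :: "'d pforest \<Rightarrow> cut_choice list \<Rightarrow> 'd pforest" where
  "Rc F cs = concat (map (\<lambda>i. snd (cutPR (F ! i) (cs ! i))) [0..<length F])"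

text \<open>Coefficient of A \<otimes> B in \<Delta>(F).\<close>
definition coprod_coeff :: "'d pforest \<Rightarrow> 'd pforest \<Rightarrow> 'd pforest \<Rightarrow> nat" where
  "coprod_coeff F A B = card {cs \<in> cut_tuples F. Pc F cs = A \<and> Rc F cs = B}"

text \<open>Elements of the algebra: finitely supported Q-linear combinations of forests.
  The coproduct of x, as coefficient function on the basis A \<otimes> B of H \<otimes> H.\<close>
definition coprod :: "('d pforest \<Rightarrow>\<^sub>0 rat) \<Rightarrow> 'd pforest \<Rightarrow> 'd pforest \<Rightarrow> rat" where
  "coprod x A B = (\<Sum>F\<in>Poly_Mapping.keys x. Poly_Mapping.lookup x F * of_nat (coprod_coeff F A B))"

definition primitive :: "('d pforest \<Rightarrow>\<^sub>0 rat) \<Rightarrow> bool" where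
  "primitive x \<longleftrightarrow> (\<forall>A B. coprod x A B =
      (if B = [] then Poly_Mapping.lookup x A else 0) + (if A = [] then Poly_Mapping.lookup x B else 0))"

definition in_HD :: "'d set \<Rightarrow> ('d pforest \<Rightarrow>\<^sub>0 rat) \<Rightarrow> bool" where
  "in_HD Dset x \<longleftrightarrow> (\<forall>F\<in>Poly_Mapping.keys x. \<forall>t\<in>set F. set_ptree t \<subseteq> Dset)"

definition homogeneous :: "nat \<Rightarrow> ('d pforest \<Rightarrow>\<^sub>0 rat) \<Rightarrow> bool" where
  "homogeneous n x \<longleftrightarrow> (\<forall>F\<in>Poly_Mapping.keys x. fweight F = n)"

definition prim_space :: "'d set \<Rightarrow> nat \<Rightarrow> ('d pforest \<Rightarrow>\<^sub>0 rat) set" where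
  "prim_space Dset n = {x. in_HD Dset x \<and> homogeneous n x \<and> primitive x}"

definition qscale :: "rat \<Rightarrow> ('a \<Rightarrow>\<^sub>0 rat) \<Rightarrow> ('a \<Rightarrow>\<^sub>0 rat)" where
  "qscale c x = Poly_Mapping.map (\<lambda>v. c * v) x"

definition prim_dim :: "'d set \<Rightarrow> nat \<Rightarrow> nat" where
  "prim_dim Dset n = vector_space.dim qscale (prim_space Dset n)"

definition tau :: "nat \<Rightarrow> nat" where
  "tau n = card {t :: unit ptree. tsize t = n}"

end

(*
  A homogeneous element of weight n is primitive iff all its coefficients on tensors A (x) B
  with A, B <> 1 vanish.  Every forest not ending in a single vertex is F = K B_d(C) with C <> 1,
  and its leading tensor C (x) K B_d(1) occurs in Delta(F) but otherwise only in Delta(Y) for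
  forests Y of smaller rank.  Hence the vanishing of the leading coefficients is a triangular
  linear system, uniquely solvable for arbitrary values on the forests K B_d(1) ending in a
  single vertex, and coassociativity shows that it forces all other coefficients to vanish.
  So p_n counts the forests of weight n ending in a single vertex, D * D^(n-1) c_(n-1) with
  c_m the Catalan number of planar forests with m vertices, and P(X) is the Catalan series
  (1 - sqrt(1 - 4 D X)) / 2.
*)

theory Submission
  imports Defs "HOL-Library.Multiset" "HOL-Computational_Algebra.Formal_Power_Series"
begin

section \<open>Multisets of basis tensors\<close>

definition mbind :: "'a multiset \<Rightarrow> ('a \<Rightarrow> 'b multiset) \<Rightarrow> 'b multiset" where
  "mbind M f = \<Sum>\<^sub># (image_mset f M)"

lemma mbind_empty [simp]: "mbind {#} f = {#}"
  and mbind_add_mset [simp]: "mbind (add_mset x M) f = f x + mbind M f"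
  and mbind_union [simp]: "mbind (M + N) f = mbind M f + mbind N f"
  and mbind_singleton [simp]: "mbind {#x#} f = f x"
  by (simp_all add: mbind_def)

lemma mbind_image_mset: "mbind (image_mset g M) f = mbind M (\<lambda>x. f (g x))"
  by (induction M) auto

lemma image_mset_mbind: "image_mset g (mbind M f) = mbind M (\<lambda>x. image_mset g (f x))"
  by (induction M) auto

lemma mbind_assoc: "mbind (mbind M f) g = mbind M (\<lambda>x. mbind (f x) g)"
  by (induction M) auto

lemma mbind_cong: "(\<And>x. x \<in># M \<Longrightarrow> f x = g x) \<Longrightarrow> mbind M f = mbind M g"
  by (induction M) auto

lemma mbind_union_fun: "mbind M (\<lambda>x. f x + g x) = mbind M f + mbind M g"
  by (induction M) auto

lemma mbind_empty_fun [simp]: "mbind M (\<lambda>x. {#}) = {#}"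
  by (induction M) auto

lemma mbind_add_mset_fun: "mbind M (\<lambda>x. add_mset (f x) (g x)) = image_mset f M + mbind M g"
  by (induction M) auto

lemma mbind_commute: "mbind M (\<lambda>x. mbind N (h x)) = mbind N (\<lambda>y. mbind M (\<lambda>x. h x y))"
  by (induction M) (simp_all add: mbind_union_fun)

lemma set_mset_mbind: "set_mset (mbind M f) = (\<Union>x\<in>set_mset M. set_mset (f x))"
  by (induction M) auto

lemma count_mbind: "count (mbind M f) y = (\<Sum>x\<in>#M. count (f x) y)"
  by (induction M) auto

lemma filter_mset_mbind: "filter_mset Q (mbind M f) = mbind M (\<lambda>x. filter_mset Q (f x))"
  by (induction M) auto

lemma mbind_if_empty: "mbind M (\<lambda>x. if Q x then f x else {#}) = mbind (filter_mset Q M) f"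
  by (induction M) auto

lemma image_mset_mset_set_Times:
  assumes "finite A" "finite B"
  shows "image_mset h (mset_set (A \<times> B)) =
    mbind (mset_set A) (\<lambda>a. image_mset (\<lambda>b. h (a, b)) (mset_set B))"
  using assms(1)
proof (induction A rule: finite_induct)
  case (insert a A)
  have "mset_set (insert a A \<times> B) = mset_set (Pair a ` B) + mset_set (A \<times> B)"
    using insert assms(2) by (subst mset_set_Union[symmetric]) (auto intro: arg_cong[where f = mset_set])
  moreover have "mset_set (Pair a ` B) = image_mset (Pair a) (mset_set B)"
    by (simp add: image_mset_mset_set inj_on_def)
  ultimately show ?case
    using insert by (simp add: multiset.map_comp o_def)
qed simp

lemma count_image_mset_mset_set:
  "finite X \<Longrightarrow> count (image_mset g (mset_set X)) y = card {x \<in> X. g x = y}"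
proof (induction X rule: finite_induct)
  case (insert x X)
  have "{z \<in> insert x X. g z = y} = (if g x = y then insert x {z \<in> X. g z = y} else {z \<in> X. g z = y})"
    by auto
  then show ?case
    using insert by auto
qed simp

lemma count_image_mset_append_third:
  "count (image_mset (\<lambda>(P', R'). (P', R', R)) N) (A, C, Z) = (if R = Z then count N (A, C) else 0)"
proof -
  have "(\<lambda>(P', R'). (P', R', R)) -` {(A, C, Z)} = (if R = Z then {(A, C)} else {})"
    by auto
  then show ?thesis
    by (cases "(A, C) \<in># N") (auto simp: count_image_mset Int_insert_left not_in_iff)
qed

lemma count_image_mset_prepend_first:
  "count (image_mset (Pair P) N) (A, C, Z) = (if P = A then count N (C, Z) else 0)"
proof -
  have "Pair P -` {(A, C, Z)} = (if P = A then {(C, Z)} else {})"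
    by auto
  then show ?thesis
    by (cases "(C, Z) \<in># N") (auto simp: count_image_mset Int_insert_left not_in_iff)
qed

lemma sum_mset_if_snd_eq:
  fixes g :: "'a \<Rightarrow> nat"
  assumes "finite T" "\<And>P R. (P, R) \<in># M \<Longrightarrow> P \<in> T"
  shows "(\<Sum>(P, R)\<in>#M. if R = Z then g P else 0) = (\<Sum>P\<in>T. g P * count M (P, Z))"
  using assms(2)
proof (induction M)
  case (add X M)
  obtain P0 R0 where X: "X = (P0, R0)"
    by fastforce
  have "P0 \<in> T" and M_T: "\<And>P R. (P, R) \<in># M \<Longrightarrow> P \<in> T"
    using add.prems[of P0 R0] X add.prems by auto
  have "(\<Sum>P\<in>T. g P * count (add_mset X M) (P, Z)) =
      (\<Sum>P\<in>T. g P * count M (P, Z)) + (\<Sum>P\<in>T. if P = P0 \<and> R0 = Z then g P else 0)"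
    unfolding X by (simp add: sum.distrib[symmetric] algebra_simps) (intro sum.cong, auto)
  also have "(\<Sum>P\<in>T. if P = P0 \<and> R0 = Z then g P else 0) = (if R0 = Z then g P0 else 0)"
    using \<open>P0 \<in> T\<close> assms(1) by (cases "R0 = Z") auto
  finally show ?case
    using add.IH[OF M_T] X by simp
qed simp

lemma sum_mset_if_fst_eq:
  fixes g :: "'a \<Rightarrow> nat"
  assumes "finite T" "\<And>P R. (P, R) \<in># M \<Longrightarrow> R \<in> T"
  shows "(\<Sum>(P, R)\<in>#M. if P = A then g R else 0) = (\<Sum>R\<in>T. count M (A, R) * g R)"
  using assms(2)
proof (induction M)
  case (add X M)
  obtain P0 R0 where X: "X = (P0, R0)"
    by fastforce
  have "R0 \<in> T" and M_T: "\<And>P R. (P, R) \<in># M \<Longrightarrow> R \<in> T"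
    using add.prems[of P0 R0] X add.prems by auto
  have "(\<Sum>R\<in>T. count (add_mset X M) (A, R) * g R) =
      (\<Sum>R\<in>T. count M (A, R) * g R) + (\<Sum>R\<in>T. if R = R0 \<and> P0 = A then g R else 0)"
    unfolding X by (simp add: sum.distrib[symmetric] algebra_simps) (intro sum.cong, auto)
  also have "(\<Sum>R\<in>T. if R = R0 \<and> P0 = A then g R else 0) = (if P0 = A then g R0 else 0)"
    using \<open>R0 \<in> T\<close> assms(1) by (cases "P0 = A") auto
  finally show ?case
    using add.IH[OF M_T] X by simp
qed simp

text \<open>The product of \<open>H \<otimes> H\<close> on basis tensors, \<open>(a \<otimes> b) (c \<otimes> d) = a c \<otimes> b d\<close>,
  extended additively to multisets of basis tensors.\<close>

definition tensor_mult ::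
    "('a list \<times> 'b list) multiset \<Rightarrow> ('a list \<times> 'b list) multiset \<Rightarrow> ('a list \<times> 'b list) multiset" where
  "tensor_mult M N = mbind M (\<lambda>(a, b). image_mset (\<lambda>(c, d). (a @ c, b @ d)) N)"

lemma tensor_mult_unit_left [simp]: "tensor_mult {#([], [])#} N = N"
  by (simp add: tensor_mult_def case_prod_beta)

lemma tensor_mult_unit_right [simp]: "tensor_mult M {#([], [])#} = M"
  by (induction M) (auto simp: tensor_mult_def)

lemma tensor_mult_assoc: "tensor_mult (tensor_mult M N) K = tensor_mult M (tensor_mult N K)"
  unfolding tensor_mult_def
  by (simp add: mbind_assoc mbind_image_mset image_mset_mbind case_prod_unfold multiset.map_comp o_def)

lemma tensor_mult_singleton [simp]: "tensor_mult {#(a, b)#} {#(c, d)#} = {#(a @ c, b @ d)#}"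
  by (simp add: tensor_mult_def)

lemma mem_tensor_mult:
  "x \<in># tensor_mult M N \<longleftrightarrow> (\<exists>P1 R1 P2 R2. (P1, R1) \<in># M \<and> (P2, R2) \<in># N \<and> x = (P1 @ P2, R1 @ R2))"
  unfolding tensor_mult_def set_mset_mbind by force

section \<open>The coproduct as a recursively defined multiset\<close>

text \<open>The recursion is the cocycle property \<open>\<Delta>(B\<^sub>d(G)) = B\<^sub>d(G) \<otimes> 1 + (id \<otimes> B\<^sub>d) \<Delta>(G)\<close>
  of the grafting operator together with multiplicativity of \<open>\<Delta>\<close>.\<close>

fun Delta_tree :: "'d ptree \<Rightarrow> ('d pforest \<times> 'd pforest) multiset"
and Delta :: "'d pforest \<Rightarrow> ('d pforest \<times> 'd pforest) multiset" where
  "Delta_tree (Node d G) = add_mset ([Node d G], []) (image_mset (\<lambda>(P, R). (P, [Node d R])) (Delta G))"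
| "Delta [] = {#([], [])#}"
| "Delta (t # G) = tensor_mult (Delta_tree t) (Delta G)"

lemma Delta_append: "Delta (F @ G) = tensor_mult (Delta F) (Delta G)"
  by (induction F) (auto simp: tensor_mult_assoc)

lemma verts_Node: "verts (Node d ts) = insert [] {i # p | i p. i < length ts \<and> p \<in> verts (ts ! i)}"
proof -
  have "x \<in> verts (Node d ts) \<longleftrightarrow> x \<in> insert [] {i # p | i p. i < length ts \<and> p \<in> verts (ts ! i)}" for x
    by (cases x) (auto simp: verts_def)
  then show ?thesis
    by blast
qed

lemma Nil_in_verts [simp]: "[] \<in> verts t"
  by (simp add: verts_def)

lemma finite_verts: "finite (verts t)"
proof (induction t)
  case (Node d ts)
  have "{i # p | i p. i < length ts \<and> p \<in> verts (ts ! i)} = (\<Union>i<length ts. Cons i ` verts (ts ! i))"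
    by auto
  then show ?case
    using Node by (simp add: verts_Node)
qed

definition forest_verts :: "nat \<Rightarrow> 'd pforest \<Rightarrow> nat list set" where
  "forest_verts i G = {k # p | k p. i \<le> k \<and> k < i + length G \<and> p \<in> verts (G ! (k - i))}"

definition prefix_antichain :: "nat list set \<Rightarrow> bool" where
  "prefix_antichain S \<longleftrightarrow> (\<forall>p r. p \<in> S \<and> p @ r \<in> S \<longrightarrow> r = [])"

definition forest_antichains :: "nat \<Rightarrow> 'd pforest \<Rightarrow> nat list set set" where
  "forest_antichains i G = {S. S \<subseteq> forest_verts i G \<and> prefix_antichain S}"

definition antichains :: "'d ptree \<Rightarrow> nat list set set" where
  "antichains t = {S. S \<subseteq> verts t \<and> prefix_antichain S}"

text \<open>An antichain \<open>S \<noteq> {[]}\<close> encodes the cut of the edges entering the vertices of \<open>S\<close>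
  (for \<open>S = {}\<close> the empty cut); \<open>{[]}\<close> encodes the total cut.\<close>

definition cut_at :: "'d ptree \<Rightarrow> nat list set \<Rightarrow> 'd pforest \<times> 'd pforest" where
  "cut_at t S = (if [] \<in> S then ([t], []) else (cutP t S, [cutR t S]))"

lemma forest_verts_Nil [simp]: "forest_verts i [] = {}"
  by (auto simp: forest_verts_def)

lemma forest_verts_Cons: "forest_verts i (t # G) = Cons i ` verts t \<union> forest_verts (Suc i) G"
proof (intro set_eqI iffI)
  fix x assume "x \<in> forest_verts i (t # G)"
  then obtain k p where x: "x = k # p" "i \<le> k" "k < i + Suc (length G)" "p \<in> verts ((t # G) ! (k - i))"
    by (auto simp: forest_verts_def)
  show "x \<in> Cons i ` verts t \<union> forest_verts (Suc i) G"
  proof (cases "k = i")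
    case False
    then have "k - i = Suc (k - Suc i)"
      using x by simp
    then show ?thesis
      using x False unfolding forest_verts_def by auto
  qed (use x in auto)
next
  fix x assume "x \<in> Cons i ` verts t \<union> forest_verts (Suc i) G"
  then show "x \<in> forest_verts i (t # G)"
  proof
    assume "x \<in> forest_verts (Suc i) G"
    then obtain k p where x: "x = k # p" "Suc i \<le> k" "k < Suc i + length G" "p \<in> verts (G ! (k - Suc i))"
      by (auto simp: forest_verts_def)
    then have "k - i = Suc (k - Suc i)"
      by simp
    then show ?thesis
      using x unfolding forest_verts_def by force
  qed (auto simp: forest_verts_def)
qed

lemma forest_verts_ConsE:
  assumes "q \<in> forest_verts j G"
  obtains k p where "q = k # p" "j \<le> k"
  using assms by (auto simp: forest_verts_def)

lemma Nil_notin_forest_verts [simp]: "[] \<notin> forest_verts i G"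
  by (simp add: forest_verts_def)

lemma Cons_notin_forest_verts_Suc [simp]: "i # p \<notin> forest_verts (Suc i) G"
  by (simp add: forest_verts_def)

lemma verts_Node_forest_verts: "verts (Node d G) = insert [] (forest_verts 0 G)"
  by (auto simp: verts_Node forest_verts_def)

lemma finite_forest_verts: "finite (forest_verts i G)"
  by (induction G arbitrary: i) (simp_all add: forest_verts_Cons finite_verts)

lemma finite_forest_antichains: "finite (forest_antichains i G)"
  by (rule finite_subset[of _ "Pow (forest_verts i G)"]) (auto simp: finite_forest_verts forest_antichains_def)

lemma finite_antichains: "finite (antichains t)"
  by (rule finite_subset[of _ "Pow (verts t)"]) (auto simp: finite_verts antichains_def)

lemma antichain_with_root:
  assumes "S \<in> antichains t" "[] \<in> S"
  shows "S = {[]}"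
proof -
  have "p = []" if "p \<in> S" for p
  proof -
    have "[] \<in> S \<and> [] @ p \<in> S"
      using assms(2) that by simp
    then show ?thesis
      using assms(1) unfolding antichains_def prefix_antichain_def by blast
  qed
  then show ?thesis
    using assms(2) by blast
qed

lemma Nil_notin_forest_antichain: "S \<in> forest_antichains i G \<Longrightarrow> [] \<notin> S"
  by (auto simp: forest_antichains_def)

lemma root_not_in_forest_antichains: "{[]} \<notin> forest_antichains i G"
  using Nil_notin_forest_antichain by blast

lemma antichains_Node: "antichains (Node d G) = insert {[]} (forest_antichains 0 G)"
proof (intro set_eqI iffI)
  fix S assume S: "S \<in> antichains (Node d G)"
  show "S \<in> insert {[]} (forest_antichains 0 G)"
  proof (cases "[] \<in> S")
    case True
    then show ?thesis using antichain_with_root[OF S] by simp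
  next
    case False
    then show ?thesis
      using S by (auto simp: antichains_def forest_antichains_def verts_Node_forest_verts)
  qed
next
  fix S assume "S \<in> insert {[]} (forest_antichains 0 G)"
  moreover have "prefix_antichain {[]}"
    by (simp add: prefix_antichain_def)
  ultimately show "S \<in> antichains (Node d G)"
    by (auto simp: antichains_def forest_antichains_def verts_Node_forest_verts)
qed

lemma prefix_antichain_Cons_preimage: "prefix_antichain S \<Longrightarrow> prefix_antichain {p. i # p \<in> S}"
  unfolding prefix_antichain_def by (metis Cons_eq_appendI mem_Collect_eq)

lemma prefix_antichain_Cons_image_Un:
  assumes a: "prefix_antichain a" and S: "S \<subseteq> forest_verts (Suc i) G" "prefix_antichain S"
  shows "prefix_antichain (Cons i ` a \<union> S)"
  unfolding prefix_antichain_def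
proof (intro allI impI)
  fix p r assume pr: "p \<in> Cons i ` a \<union> S \<and> p @ r \<in> Cons i ` a \<union> S"
  show "r = []"
  proof (cases "p \<in> S")
    case True
    then obtain k q where "p = k # q" "Suc i \<le> k"
      using S(1) by (blast elim: forest_verts_ConsE)
    then have "p @ r \<in> S"
      using pr by auto
    then show ?thesis
      using S(2) True unfolding prefix_antichain_def by blast
  next
    case False
    then obtain p' where p': "p = i # p'" "p' \<in> a"
      using pr by auto
    then have "p' @ r \<in> a"
      using pr S(1) by auto
    then show ?thesis
      using a p' unfolding prefix_antichain_def by blast
  qed
qed

lemma forest_antichains_Cons:
  "forest_antichains i (t # G) = (\<lambda>(a, S). Cons i ` a \<union> S) ` (antichains t \<times> forest_antichains (Suc i) G)"
proof (intro set_eqI iffI)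
  fix S assume S: "S \<in> forest_antichains i (t # G)"
  then have "S \<subseteq> Cons i ` verts t \<union> forest_verts (Suc i) G"
    by (simp add: forest_antichains_def forest_verts_Cons)
  then have "S = Cons i ` {p. i # p \<in> S} \<union> (S \<inter> forest_verts (Suc i) G)" "{p. i # p \<in> S} \<subseteq> verts t"
    by auto
  moreover have "prefix_antichain {p. i # p \<in> S}" "prefix_antichain (S \<inter> forest_verts (Suc i) G)"
    using S prefix_antichain_Cons_preimage unfolding forest_antichains_def prefix_antichain_def by blast+
  ultimately show "S \<in> (\<lambda>(a, S). Cons i ` a \<union> S) ` (antichains t \<times> forest_antichains (Suc i) G)"
    unfolding antichains_def forest_antichains_def by blast
next
  fix S assume "S \<in> (\<lambda>(a, S). Cons i ` a \<union> S) ` (antichains t \<times> forest_antichains (Suc i) G)"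
  then show "S \<in> forest_antichains i (t # G)"
    by (auto simp: antichains_def forest_antichains_def forest_verts_Cons intro: prefix_antichain_Cons_image_Un)
qed

lemma inj_on_forest_antichains_Cons:
  "inj_on (\<lambda>(a, S). Cons i ` a \<union> S) (antichains t \<times> forest_antichains (Suc i) G)"
proof (rule inj_onI, clarify)
  fix a S b T
  assume S: "S \<in> forest_antichains (Suc i) G" and T: "T \<in> forest_antichains (Suc i) G"
    and eq: "Cons i ` a \<union> S = Cons i ` b \<union> T"
  have nS: "i # p \<notin> S" and nT: "i # p \<notin> T" for p
    using S T by (auto simp: forest_antichains_def)
  have "a = {p. i # p \<in> Cons i ` a \<union> S}" "b = {p. i # p \<in> Cons i ` b \<union> T}"
    using nS nT by auto
  then have "a = b"
    using eq by simp
  moreover have "S = (Cons i ` a \<union> S) - Cons i ` a" "T = (Cons i ` b \<union> T) - Cons i ` b"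
    using S T by (auto simp: forest_antichains_def)
  ultimately show "a = b \<and> S = T"
    using eq by simp
qed

lemma cutPs_cutRs_cong:
  "(\<And>k p. j \<le> k \<Longrightarrow> k # p \<in> S \<longleftrightarrow> k # p \<in> S') \<Longrightarrow>
    cutPs j G S = cutPs j G S' \<and> cutRs j G S = cutRs j G S'"
proof (induction G arbitrary: j)
  case (Cons t G)
  have "cutPs (Suc j) G S = cutPs (Suc j) G S' \<and> cutRs (Suc j) G S = cutRs (Suc j) G S'"
    using Cons.IH[of "Suc j"] Cons.prems by simp
  moreover have "[j] \<in> S \<longleftrightarrow> [j] \<in> S'" "{p. j # p \<in> S} = {p. j # p \<in> S'}"
    using Cons.prems by auto
  ultimately show ?case
    by simp
qed simp

lemma cutP_cutR_empty: "cutP t {} = [] \<and> cutR t {} = t"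
proof (induction t)
  case (Node d ts)
  have "cutPs i ts {} = [] \<and> cutRs i ts {} = ts" for i
    using Node by (induction ts arbitrary: i) auto
  then show ?case
    by simp
qed

lemma cutPs_cutRs_Cons:
  assumes "S \<in> forest_antichains (Suc i) G"
  shows "cutPs i (t # G) (Cons i ` a \<union> S) = fst (cut_at t a) @ cutPs (Suc i) G S
       \<and> cutRs i (t # G) (Cons i ` a \<union> S) = snd (cut_at t a) @ cutRs (Suc i) G S"
proof -
  have nS: "i # p \<notin> S" for p
    using assms by (auto simp: forest_antichains_def)
  have "cutPs (Suc i) G (Cons i ` a \<union> S) = cutPs (Suc i) G S \<and>
        cutRs (Suc i) G (Cons i ` a \<union> S) = cutRs (Suc i) G S"
    by (rule cutPs_cutRs_cong) auto
  moreover have "[i] \<in> Cons i ` a \<union> S \<longleftrightarrow> [] \<in> a" "{p. i # p \<in> Cons i ` a \<union> S} = a"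
    using nS by auto
  ultimately show ?thesis
    by (simp add: cut_at_def)
qed

lemma image_mset_cut_forest_antichains:
  fixes G :: "'d pforest"
  assumes "\<forall>t \<in> set G. image_mset (cut_at t) (mset_set (antichains t)) = Delta_tree t"
  shows "image_mset (\<lambda>S. (cutPs i G S, cutRs i G S)) (mset_set (forest_antichains i G)) = Delta G"
  using assms
proof (induction G arbitrary: i)
  case Nil
  have "forest_antichains i ([] :: 'd pforest) = {{}}"
    by (auto simp: forest_antichains_def prefix_antichain_def)
  then show ?case
    by simp
next
  case (Cons t G)
  let ?join = "\<lambda>(a, S). Cons i ` a \<union> S"
  let ?cut = "\<lambda>j S. (cutPs j G S, cutRs j G S)"
  let ?prepend = "\<lambda>a (P, R). (fst (cut_at t a) @ P, snd (cut_at t a) @ R)"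
  let ?cut_tG = "\<lambda>S. (cutPs i (t # G) S, cutRs i (t # G) S)"
  have "mset_set (forest_antichains i (t # G)) =
      image_mset ?join (mset_set (antichains t \<times> forest_antichains (Suc i) G))"
    unfolding forest_antichains_Cons by (rule image_mset_mset_set[OF inj_on_forest_antichains_Cons, symmetric])
  then have "image_mset ?cut_tG (mset_set (forest_antichains i (t # G)))
      = image_mset (?cut_tG \<circ> ?join) (mset_set (antichains t \<times> forest_antichains (Suc i) G))"
    by (simp only: multiset.map_comp)
  also have "\<dots> = mbind (mset_set (antichains t))
      (\<lambda>a. image_mset (\<lambda>S. (?cut_tG \<circ> ?join) (a, S)) (mset_set (forest_antichains (Suc i) G)))"
    by (rule image_mset_mset_set_Times[OF finite_antichains finite_forest_antichains])
  also have "\<dots> = mbind (mset_set (antichains t))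
      (\<lambda>a. image_mset (?prepend a) (image_mset (?cut (Suc i)) (mset_set (forest_antichains (Suc i) G))))"
    unfolding multiset.map_comp
    by (intro mbind_cong image_mset_cong)
      (simp add: cutPs_cutRs_Cons finite_forest_antichains del: cutPs.simps cutRs.simps)
  also have "\<dots> = mbind (mset_set (antichains t)) (\<lambda>a. image_mset (?prepend a) (Delta G))"
    using Cons.IH Cons.prems by simp
  also have "\<dots> = tensor_mult (image_mset (cut_at t) (mset_set (antichains t))) (Delta G)"
    by (simp add: tensor_mult_def mbind_image_mset case_prod_beta)
  also have "\<dots> = Delta (t # G)"
    using Cons.prems by simp
  finally show ?case .
qed

lemma image_mset_cut_at_antichains: "image_mset (cut_at t) (mset_set (antichains t)) = Delta_tree t"
proof (induction t)
  case (Node d G)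
  have "image_mset (cut_at (Node d G)) (mset_set (forest_antichains 0 G))
      = image_mset (\<lambda>(P, R). (P, [Node d R])) (image_mset (\<lambda>S. (cutPs 0 G S, cutRs 0 G S)) (mset_set (forest_antichains 0 G)))"
    unfolding multiset.map_comp
    by (intro image_mset_cong) (auto simp: cut_at_def finite_forest_antichains dest: Nil_notin_forest_antichain)
  also have "\<dots> = image_mset (\<lambda>(P, R). (P, [Node d R])) (Delta G)"
    using Node by (simp add: image_mset_cut_forest_antichains)
  finally have "image_mset (cut_at (Node d G)) (mset_set (forest_antichains 0 G))
      = image_mset (\<lambda>(P, R). (P, [Node d R])) (Delta G)" .
  moreover have "cut_at (Node d G) {[]} = ([Node d G], [])"
    by (simp add: cut_at_def)
  ultimately show ?case
    by (simp add: antichains_Node root_not_in_forest_antichains finite_forest_antichains)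
qed

definition cut_choice_of :: "nat list set \<Rightarrow> cut_choice" where
  "cut_choice_of S = (if [] \<in> S then TotalCut else if S = {} then EmptyCut else AdmCut S)"

lemma valid_cuts_eq: "{c. valid_cut t c} = cut_choice_of ` antichains t"
proof (intro set_eqI iffI)
  fix c assume "c \<in> {c. valid_cut t c}"
  then have valid: "valid_cut t c"
    by simp
  have "prefix_antichain {}" "prefix_antichain {[]}"
    by (simp_all add: prefix_antichain_def)
  then have "{} \<in> antichains t" "{[]} \<in> antichains t"
    by (simp_all add: antichains_def)
  moreover have "cut_choice_of {} = EmptyCut" "cut_choice_of {[]} = TotalCut"
    by (simp_all add: cut_choice_of_def)
  moreover have "S \<in> antichains t" "cut_choice_of S = AdmCut S" if "c = AdmCut S" for S
    using valid that by (auto simp: valid_cut_def admissible_cut_def antichains_def prefix_antichain_def cut_choice_of_def)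
  ultimately show "c \<in> cut_choice_of ` antichains t"
    by (cases c) (metis imageI)+
next
  fix c assume "c \<in> cut_choice_of ` antichains t"
  then obtain S where "S \<in> antichains t" "c = cut_choice_of S"
    by blast
  then show "c \<in> {c. valid_cut t c}"
    by (auto simp: cut_choice_of_def valid_cut_def admissible_cut_def antichains_def prefix_antichain_def)
qed

lemma inj_on_cut_choice_of: "inj_on cut_choice_of (antichains t)"
  by (rule inj_onI) (auto simp: cut_choice_of_def split: if_splits dest: antichain_with_root)

lemma cutPR_cut_choice_of: "S \<in> antichains t \<Longrightarrow> cutPR t (cut_choice_of S) = cut_at t S"
  using cutP_cutR_empty[of t] by (auto simp: cut_choice_of_def cutPR_def cut_at_def)

lemma finite_valid_cuts: "finite {c. valid_cut t c}"
  by (simp add: valid_cuts_eq finite_antichains)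

lemma image_mset_cutPR_valid_cuts: "image_mset (cutPR t) (mset_set {c. valid_cut t c}) = Delta_tree t"
proof -
  have "mset_set {c. valid_cut t c} = image_mset cut_choice_of (mset_set (antichains t))"
    unfolding valid_cuts_eq by (rule image_mset_mset_set[OF inj_on_cut_choice_of, symmetric])
  then have "image_mset (cutPR t) (mset_set {c. valid_cut t c}) = image_mset (cut_at t) (mset_set (antichains t))"
    by (auto simp: multiset.map_comp finite_antichains cutPR_cut_choice_of intro: image_mset_cong)
  then show ?thesis
    by (simp add: image_mset_cut_at_antichains)
qed

lemma cut_tuples_Nil: "cut_tuples [] = {[]}"
  by (auto simp: cut_tuples_def)

lemma cut_tuples_Cons: "cut_tuples (t # F) = (\<lambda>(c, cs). c # cs) ` ({c. valid_cut t c} \<times> cut_tuples F)"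
proof (intro set_eqI iffI)
  fix x assume x: "x \<in> cut_tuples (t # F)"
  then obtain c cs where "x = c # cs"
    by (cases x) (auto simp: cut_tuples_def)
  moreover have "valid_cut t c" "cs \<in> cut_tuples F"
    using x unfolding cut_tuples_def \<open>x = c # cs\<close> by (force, fastforce)
  ultimately show "x \<in> (\<lambda>(c, cs). c # cs) ` ({c. valid_cut t c} \<times> cut_tuples F)"
    by auto
next
  fix x assume "x \<in> (\<lambda>(c, cs). c # cs) ` ({c. valid_cut t c} \<times> cut_tuples F)"
  then show "x \<in> cut_tuples (t # F)"
    by (auto simp: cut_tuples_def nth_Cons' less_Suc_eq_0_disj)
qed

lemma finite_cut_tuples: "finite (cut_tuples F)"
  by (induction F) (auto simp: cut_tuples_Nil cut_tuples_Cons finite_valid_cuts)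

lemma Pc_Cons: "Pc (t # F) (c # cs) = fst (cutPR t c) @ Pc F cs"
  and Rc_Cons: "Rc (t # F) (c # cs) = snd (cutPR t c) @ Rc F cs"
  unfolding Pc_def Rc_def length_Cons upt_conv_Cons[OF zero_less_Suc] map_Suc_upt[symmetric]
  by (simp_all add: o_def)

lemma image_mset_cut_tuples: "image_mset (\<lambda>cs. (Pc F cs, Rc F cs)) (mset_set (cut_tuples F)) = Delta F"
proof (induction F)
  case Nil
  show ?case
    by (simp add: cut_tuples_Nil Pc_def Rc_def)
next
  case (Cons t F)
  let ?cut = "\<lambda>F cs. (Pc F cs, Rc F cs)"
  let ?prepend = "\<lambda>c (P, R). (fst (cutPR t c) @ P, snd (cutPR t c) @ R)"
  have "mset_set (cut_tuples (t # F)) = image_mset (\<lambda>(c, cs). c # cs) (mset_set ({c. valid_cut t c} \<times> cut_tuples F))"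
    unfolding cut_tuples_Cons by (rule image_mset_mset_set[symmetric]) (auto simp: inj_on_def)
  then have "image_mset (?cut (t # F)) (mset_set (cut_tuples (t # F)))
      = mbind (mset_set {c. valid_cut t c}) (\<lambda>c. image_mset (\<lambda>cs. ?cut (t # F) (c # cs)) (mset_set (cut_tuples F)))"
    by (simp add: image_mset_mbind multiset.map_comp o_def image_mset_mset_set_Times finite_valid_cuts finite_cut_tuples)
  also have "\<dots> = mbind (mset_set {c. valid_cut t c}) (\<lambda>c. image_mset (?prepend c) (image_mset (?cut F) (mset_set (cut_tuples F))))"
    by (simp add: multiset.map_comp o_def Pc_Cons Rc_Cons)
  also have "\<dots> = tensor_mult (image_mset (cutPR t) (mset_set {c. valid_cut t c})) (Delta F)"
    by (simp add: Cons.IH tensor_mult_def mbind_image_mset case_prod_beta)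
  also have "\<dots> = Delta (t # F)"
    by (simp add: image_mset_cutPR_valid_cuts)
  finally show ?case .
qed

lemma coprod_coeff_eq_count_Delta: "coprod_coeff F A B = count (Delta F) (A, B)"
proof -
  have "coprod_coeff F A B = card {cs \<in> cut_tuples F. (Pc F cs, Rc F cs) = (A, B)}"
    by (simp add: coprod_coeff_def)
  also have "\<dots> = count (Delta F) (A, B)"
    by (simp flip: image_mset_cut_tuples add: count_image_mset_mset_set finite_cut_tuples)
  finally show ?thesis .
qed

section \<open>Weight, counit and coassociativity\<close>

definition fdecs :: "'d pforest \<Rightarrow> 'd set" where
  "fdecs F = (\<Union>t\<in>set F. set_ptree t)"

lemma fdecs_simps [simp]:
  "fdecs [] = {}" "fdecs (t # F) = set_ptree t \<union> fdecs F" "fdecs (F @ G) = fdecs F \<union> fdecs G"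
  by (auto simp: fdecs_def)

lemma fweight_simps [simp]:
  "fweight [] = 0" "fweight (t # F) = tsize t + fweight F" "fweight (F @ G) = fweight F + fweight G"
  by (auto simp: fweight_def)

lemma tsize_Node [simp]: "tsize (Node d G) = Suc (fweight G)"
  by (simp add: fweight_def)

lemma set_ptree_Node [simp]: "set_ptree (Node d G) = insert d (fdecs G)"
  by (simp add: fdecs_def)

declare tsize.simps [simp del] ptree.set [simp del]

lemma fweight_eq_0_iff [simp]: "fweight F = 0 \<longleftrightarrow> F = []"
proof (cases F)
  case (Cons t G)
  then show ?thesis
    by (cases t) simp
qed simp

lemma length_le_fweight: "length F \<le> fweight F"
proof (induction F)
  case (Cons t F)
  then show ?case
    by (cases t) simp
qed simp

lemma mem_Delta:
  fixes t :: "'d ptree" and F :: "'d pforest"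
  shows "(P, R) \<in># Delta_tree t \<Longrightarrow>
      fweight P + fweight R = tsize t \<and> fdecs P \<union> fdecs R \<subseteq> set_ptree t \<and> length R \<le> 1"
    and "(P, R) \<in># Delta F \<Longrightarrow>
      fweight P + fweight R = fweight F \<and> fdecs P \<union> fdecs R \<subseteq> fdecs F \<and> length R \<le> length F"
proof (induction t and F arbitrary: P R and P R rule: Delta_tree_Delta.induct)
  case (1 d G)
  then show ?case
    by (auto dest!: "1.IH")
next
  case (3 t G)
  then obtain P1 R1 P2 R2 where "(P1, R1) \<in># Delta_tree t" "(P2, R2) \<in># Delta G" "P = P1 @ P2" "R = R1 @ R2"
    by (auto simp: mem_tensor_mult)
  then show ?case
    using "3.IH" by fastforce
qed simp

lemma filter_mset_tensor_mult:
  assumes "\<And>a b c d. Q (a @ c, b @ d) \<longleftrightarrow> Q (a, b) \<and> Q (c, d)"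
  shows "filter_mset Q (tensor_mult M N) = tensor_mult (filter_mset Q M) (filter_mset Q N)"
proof -
  have "filter_mset Q (tensor_mult M N) =
      mbind M (\<lambda>(a, b). if Q (a, b) then image_mset (\<lambda>(c, d). (a @ c, b @ d)) (filter_mset Q N) else {#})"
    unfolding tensor_mult_def filter_mset_mbind
    by (intro mbind_cong) (auto simp: assms filter_mset_image_mset o_def case_prod_unfold)
  also have "\<dots> = tensor_mult (filter_mset Q M) (filter_mset Q N)"
    unfolding tensor_mult_def
    by (subst mbind_if_empty[symmetric], rule mbind_cong) (auto simp: case_prod_unfold)
  finally show ?thesis .
qed

lemma filter_Delta_right_Nil:
  fixes t :: "'d ptree" and F :: "'d pforest"
  shows "filter_mset (\<lambda>x. snd x = []) (Delta_tree t) = {#([t], [])#}"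
    and "filter_mset (\<lambda>x. snd x = []) (Delta F) = {#(F, [])#}"
  by (induction t and F rule: Delta_tree_Delta.induct)
    (simp_all add: filter_mset_image_mset o_def case_prod_beta filter_mset_tensor_mult)

lemma filter_Delta_left_Nil:
  fixes t :: "'d ptree" and F :: "'d pforest"
  shows "filter_mset (\<lambda>x. fst x = []) (Delta_tree t) = {#([], [t])#}"
    and "filter_mset (\<lambda>x. fst x = []) (Delta F) = {#([], F)#}"
proof (induction t and F rule: Delta_tree_Delta.induct)
  case (1 d G)
  have "filter_mset (\<lambda>x. fst x = []) (image_mset (\<lambda>(P, R). (P, [Node d R])) (Delta G))
      = image_mset (\<lambda>(P, R). (P, [Node d R])) (filter_mset (\<lambda>x. fst x = []) (Delta G))"
    by (simp add: filter_mset_image_mset o_def case_prod_beta)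
  then show ?case
    using 1 by simp
qed (simp_all add: filter_mset_tensor_mult)

lemma count_Delta_right_Nil: "count (Delta F) (A, []) = (if A = F then 1 else 0)"
proof -
  have "count (Delta F) (A, []) = count (filter_mset (\<lambda>x. snd x = []) (Delta F)) (A, [])"
    by simp
  then show ?thesis
    by (simp add: filter_Delta_right_Nil)
qed

lemma count_Delta_left_Nil: "count (Delta F) ([], B) = (if B = F then 1 else 0)"
proof -
  have "count (Delta F) ([], B) = count (filter_mset (\<lambda>x. fst x = []) (Delta F)) ([], B)"
    by simp
  then show ?thesis
    by (simp add: filter_Delta_left_Nil)
qed

lemma mem_Delta_right_Nil_iff: "(P, []) \<in># Delta F \<longleftrightarrow> P = F"
  using count_Delta_right_Nil[of F P] by (metis count_eq_zero_iff zero_neq_one)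

lemma mem_Delta_left_Nil_iff: "([], R) \<in># Delta F \<longleftrightarrow> R = F"
  using count_Delta_left_Nil[of F R] by (metis count_eq_zero_iff zero_neq_one)

definition tensor3_mult ::
    "('a list \<times> 'b list \<times> 'c list) multiset \<Rightarrow> ('a list \<times> 'b list \<times> 'c list) multiset \<Rightarrow>
      ('a list \<times> 'b list \<times> 'c list) multiset" where
  "tensor3_mult M N = mbind M (\<lambda>(a, b, c). image_mset (\<lambda>(a', b', c'). (a @ a', b @ b', c @ c')) N)"

definition Delta_tensor_id :: "'d pforest \<Rightarrow> ('d pforest \<times> 'd pforest \<times> 'd pforest) multiset" where
  "Delta_tensor_id F = mbind (Delta F) (\<lambda>(P, R). image_mset (\<lambda>(P', R'). (P', R', R)) (Delta P))"

definition id_tensor_Delta :: "'d pforest \<Rightarrow> ('d pforest \<times> 'd pforest \<times> 'd pforest) multiset" where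
  "id_tensor_Delta F = mbind (Delta F) (\<lambda>(P, R). image_mset (\<lambda>(P', R'). (P, P', R')) (Delta R))"

lemma Delta_tensor_id_Cons: "Delta_tensor_id (t # F) = tensor3_mult (Delta_tensor_id [t]) (Delta_tensor_id F)"
  unfolding Delta_tensor_id_def tensor3_mult_def
  by (simp add: tensor_mult_def mbind_assoc mbind_image_mset image_mset_mbind multiset.map_comp o_def
      Delta_append case_prod_unfold) (rule mbind_cong, rule mbind_commute)

lemma id_tensor_Delta_Cons: "id_tensor_Delta (t # F) = tensor3_mult (id_tensor_Delta [t]) (id_tensor_Delta F)"
  unfolding id_tensor_Delta_def tensor3_mult_def
  by (simp add: tensor_mult_def mbind_assoc mbind_image_mset image_mset_mbind multiset.map_comp o_def
      Delta_append case_prod_unfold) (rule mbind_cong, rule mbind_commute)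

lemma Delta_tensor_id_Node: "Delta_tensor_id [Node d G] =
    add_mset ([Node d G], [], []) (image_mset (\<lambda>(P, R). (P, [Node d R], [])) (Delta G))
    + image_mset (\<lambda>(P, Q, R). (P, Q, [Node d R])) (Delta_tensor_id G)"
  unfolding Delta_tensor_id_def
  by (simp add: Delta_tree.simps[of d G] mbind_image_mset image_mset_mbind multiset.map_comp o_def
      case_prod_unfold del: Delta_tree.simps)

lemma id_tensor_Delta_Node: "id_tensor_Delta [Node d G] =
    add_mset ([Node d G], [], []) (image_mset (\<lambda>(P, R). (P, [Node d R], [])) (Delta G))
    + image_mset (\<lambda>(P, Q, R). (P, Q, [Node d R])) (id_tensor_Delta G)"
  unfolding id_tensor_Delta_def
  by (simp add: Delta_tree.simps[of d G] mbind_image_mset image_mset_mbind multiset.map_comp o_def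
      case_prod_unfold mbind_union_fun del: Delta_tree.simps)
    (simp add: mbind_add_mset_fun image_mset_mbind multiset.map_comp o_def case_prod_unfold)

lemma Delta_coassoc:
  fixes t :: "'d ptree" and F :: "'d pforest"
  shows "Delta_tensor_id [t] = id_tensor_Delta [t]" and "Delta_tensor_id F = id_tensor_Delta F"
proof (induction t and F rule: Delta_tree_Delta.induct)
  case (1 d G)
  then show ?case
    by (simp only: Delta_tensor_id_Node id_tensor_Delta_Node)
next
  case (3 t G)
  show ?case
    by (subst Delta_tensor_id_Cons, subst id_tensor_Delta_Cons) (simp only: 3)
qed (simp add: Delta_tensor_id_def id_tensor_Delta_def)

lemma count_Delta_tensor_id:
  assumes "finite T" "\<And>P R. (P, R) \<in># Delta G \<Longrightarrow> P \<in> T"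
  shows "count (Delta_tensor_id G) (A, C, Z) = (\<Sum>P\<in>T. count (Delta P) (A, C) * count (Delta G) (P, Z))"
proof -
  have "count (Delta_tensor_id G) (A, C, Z) = (\<Sum>(P, R)\<in>#Delta G. if R = Z then count (Delta P) (A, C) else 0)"
    unfolding Delta_tensor_id_def count_mbind
    by (intro arg_cong[where f = sum_mset] image_mset_cong) (auto simp: count_image_mset_append_third)
  also have "\<dots> = (\<Sum>P\<in>T. count (Delta P) (A, C) * count (Delta G) (P, Z))"
    by (rule sum_mset_if_snd_eq[OF assms])
  finally show ?thesis .
qed

lemma count_id_tensor_Delta:
  assumes "finite T" "\<And>P R. (P, R) \<in># Delta G \<Longrightarrow> R \<in> T"
  shows "count (id_tensor_Delta G) (A, C, Z) = (\<Sum>Y\<in>T. count (Delta G) (A, Y) * count (Delta Y) (C, Z))"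
proof -
  have "count (id_tensor_Delta G) (A, C, Z) = (\<Sum>(P, R)\<in>#Delta G. if P = A then count (Delta R) (C, Z) else 0)"
    unfolding id_tensor_Delta_def count_mbind
    by (intro arg_cong[where f = sum_mset] image_mset_cong) (auto simp: count_image_mset_prepend_first)
  also have "\<dots> = (\<Sum>Y\<in>T. count (Delta G) (A, Y) * count (Delta Y) (C, Z))"
    by (rule sum_mset_if_fst_eq[OF assms])
  finally show ?thesis .
qed

section \<open>Catalan numbers and the number of planar forests\<close>

fun catalan :: "nat \<Rightarrow> nat" where
  "catalan 0 = 1"
| "catalan (Suc m) = (\<Sum>i\<le>m. catalan i * catalan (m - i))"

text \<open>Coefficients of \<open>\<surd>(1 - 4 x)\<close>.\<close>

definition sqrt_coeff :: "nat \<Rightarrow> real" where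
  "sqrt_coeff k = ((1/2) gchoose k) * (-4) ^ k"

lemma catalan_closed_form_ratio: "fact (2 * Suc m) / (fact (Suc (Suc m)) * fact (Suc m)) =
    fact (2 * m) / (fact (Suc m) * fact m) * (2 * (2 * real m + 1) / (real m + 2))"
proof -
  have num: "fact (2 * Suc m) = (2 * real m + 1) * 2 * ((real m + 1) * fact (2 * m))"
    by (simp add: algebra_simps)
  have den: "fact (Suc (Suc m)) * fact (Suc m) = (real m + 2) * ((real m + 1) * (fact (Suc m) * fact m))"
    by (simp add: algebra_simps)
  have "real m + 1 \<noteq> 0"
    by linarith
  then show ?thesis
    unfolding num den by (simp add: mult_ac)
qed

lemma sqrt_coeff_Suc: "sqrt_coeff (Suc m) = - 2 * (fact (2 * m) / (fact (Suc m) * fact m))"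
proof (induction m)
  case 0
  show ?case
    by (simp add: sqrt_coeff_def)
next
  case (Suc m)
  have step: "(1/2 gchoose Suc (Suc m)) = (1/2 - real (Suc m)) * (1/2 gchoose Suc m) / real (Suc (Suc m))"
    using gbinomial_mult_1[of "1/2 :: real" "Suc m"] by (simp add: field_simps)
  have "sqrt_coeff (Suc (Suc m)) = sqrt_coeff (Suc m) * (2 * (2 * real m + 1) / (real m + 2))"
    unfolding sqrt_coeff_def step by (simp add: field_simps)
  then show ?case
    by (simp only: Suc catalan_closed_form_ratio)
qed

lemma sqrt_coeff_convolution:
  "(\<Sum>k=0..n. sqrt_coeff k * sqrt_coeff (n - k)) = ((1::real) gchoose n) * (-4) ^ n"
proof -
  have "(\<Sum>k=0..n. sqrt_coeff k * sqrt_coeff (n - k)) =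
      (\<Sum>k=0..n. ((1/2) gchoose k) * ((1/2) gchoose (n - k))) * (-4) ^ n"
    unfolding sqrt_coeff_def sum_distrib_right
    by (rule sum.cong) (auto simp: power_add[symmetric])
  then show ?thesis
    using gbinomial_Vandermonde[of "1/2::real" "1/2" n] by simp
qed

lemma sqrt_coeff_recurrence:
  "sqrt_coeff (Suc (Suc m)) = - (\<Sum>j\<le>m. sqrt_coeff (Suc j) * sqrt_coeff (Suc (m - j))) / 2"
proof -
  let ?s = "\<lambda>k. sqrt_coeff k * sqrt_coeff (Suc (Suc m) - k)"
  have "(1::real) gchoose Suc (Suc m) = 0"
    using binomial_gbinomial[of 1 "Suc (Suc m)"] by simp
  then have "(\<Sum>k=0..Suc (Suc m). ?s k) = 0"
    by (simp only: sqrt_coeff_convolution)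
  moreover have "(\<Sum>k=0..Suc (Suc m). ?s k) = ?s 0 + (\<Sum>j=0..m. ?s (Suc j)) + ?s (Suc (Suc m))"
    by (subst sum.atLeast0_atMost_Suc_shift, subst sum.atLeast0_atMost_Suc) (simp only: add.assoc o_def)
  moreover have "?s 0 = sqrt_coeff (Suc (Suc m))" "?s (Suc (Suc m)) = sqrt_coeff (Suc (Suc m))"
    by (simp_all add: sqrt_coeff_def)
  moreover have "(\<Sum>j=0..m. ?s (Suc j)) = (\<Sum>j\<le>m. sqrt_coeff (Suc j) * sqrt_coeff (Suc (m - j)))"
    by (auto simp: atLeast0AtMost Suc_diff_le intro: sum.cong)
  ultimately show ?thesis
    by linarith
qed

lemma catalan_eq_sqrt_coeff: "real (catalan m) = - sqrt_coeff (Suc m) / 2"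
proof (induction m rule: less_induct)
  case (less m)
  show ?case
  proof (cases m)
    case (Suc k)
    have "real (catalan m) = (\<Sum>j\<le>k. real (catalan j) * real (catalan (k - j)))"
      using Suc by simp
    also have "\<dots> = (\<Sum>j\<le>k. sqrt_coeff (Suc j) * sqrt_coeff (Suc (k - j))) / 4"
      using less Suc by (simp add: sum_divide_distrib)
    also have "\<dots> = - sqrt_coeff (Suc m) / 2"
      using Suc sqrt_coeff_recurrence[of k] by simp
    finally show ?thesis .
  qed (simp add: sqrt_coeff_def)
qed

lemma catalan_closed_form: "real (catalan m) = fact (2 * m) / (fact (Suc m) * fact m)"
  by (simp add: catalan_eq_sqrt_coeff sqrt_coeff_Suc)

lemma catalan_series:
  fixes x :: real
  assumes "\<bar>x\<bar> < 1/4"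
  shows "(\<lambda>n. real (catalan n) * x ^ Suc n) sums ((1 - sqrt (1 - 4 * x)) / 2)"
proof -
  have "sqrt_coeff n * x ^ n = ((1/2) gchoose n) * (-4 * x) ^ n" for n
    unfolding sqrt_coeff_def power_mult_distrib by simp
  moreover have "(\<lambda>n. ((1/2) gchoose n) * (-4 * x) ^ n) sums sqrt (1 + -4 * x)"
    using assms by (intro sqrt_series) simp
  ultimately have "(\<lambda>n. sqrt_coeff n * x ^ n) sums sqrt (1 - 4 * x)"
    by simp
  then have "(\<lambda>n. sqrt_coeff (Suc n) * x ^ Suc n) sums (sqrt (1 - 4 * x) - 1)"
    by (subst sums_Suc_iff) (simp add: sqrt_coeff_def)
  from sums_divide[OF sums_minus[OF this], of 2] show ?thesis
    by (simp add: catalan_eq_sqrt_coeff)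
qed

definition forests :: "'d set \<Rightarrow> nat \<Rightarrow> 'd pforest set" where
  "forests D m = {F. fweight F = m \<and> fdecs F \<subseteq> D}"

lemma forests_0: "forests D 0 = {[]}"
  by (auto simp: forests_def)

lemma forests_Suc:
  "forests D (Suc m) = (\<lambda>(d, G, K). Node d G # K) ` (\<Union>i\<le>m. D \<times> forests D i \<times> forests D (m - i))"
proof (intro set_eqI iffI)
  fix F assume F: "F \<in> forests D (Suc m)"
  then have "F \<noteq> []"
    by (auto simp: forests_def)
  then obtain d G K where F_eq: "F = Node d G # K"
    by (metis neq_Nil_conv ptree.exhaust)
  then have "(d, G, K) \<in> D \<times> forests D (fweight G) \<times> forests D (m - fweight G)" "fweight G \<le> m"
    using F by (auto simp: forests_def)
  then show "F \<in> (\<lambda>(d, G, K). Node d G # K) ` (\<Union>i\<le>m. D \<times> forests D i \<times> forests D (m - i))"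
    unfolding F_eq by (intro image_eqI[of _ _ "(d, G, K)"]) auto
qed (auto simp: forests_def)

lemma finite_forests: "finite D \<Longrightarrow> finite (forests D m)"
proof (induction m rule: less_induct)
  case (less m)
  then show ?case
    by (cases m) (auto simp: forests_0 forests_Suc)
qed

lemma card_forests: "finite D \<Longrightarrow> card (forests D m) = card D ^ m * catalan m"
proof (induction m rule: less_induct)
  case (less m)
  show ?case
  proof (cases m)
    case (Suc k)
    have "inj_on (\<lambda>(d, G, K). Node d G # K) (\<Union>i\<le>k. D \<times> forests D i \<times> forests D (k - i))"
      by (auto simp: inj_on_def)
    then have "card (forests D m) = card (\<Union>i\<le>k. D \<times> forests D i \<times> forests D (k - i))"
      unfolding Suc forests_Suc by (rule card_image)
    also have "\<dots> = (\<Sum>i\<le>k. card (D \<times> forests D i \<times> forests D (k - i)))"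
    proof (rule card_UN_disjoint)
      show "\<forall>i\<in>{..k}. finite (D \<times> forests D i \<times> forests D (k - i))"
        using less.prems by (simp add: finite_forests)
    qed (auto simp: forests_def)
    also have "\<dots> = (\<Sum>i\<le>k. card D * (card (forests D i) * card (forests D (k - i))))"
      by (simp add: card_cartesian_product)
    also have "\<dots> = (\<Sum>i\<le>k. card D ^ Suc k * (catalan i * catalan (k - i)))"
    proof (rule sum.cong)
      fix i assume "i \<in> {..k}"
      then have "card D ^ i * card D ^ (k - i) = card D ^ k"
        by (simp flip: power_add)
      then show "card D * (card (forests D i) * card (forests D (k - i))) = card D ^ Suc k * (catalan i * catalan (k - i))"
        using less Suc \<open>i \<in> {..k}\<close> by (simp add: algebra_simps)
    qed simp
    finally show ?thesis
      using Suc by (simp add: sum_distrib_left)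
  qed (simp add: forests_0)
qed

definition forests_ending_in_leaf :: "'d set \<Rightarrow> nat \<Rightarrow> 'd pforest set" where
  "forests_ending_in_leaf D n = {F \<in> forests D n. \<exists>K d. F = K @ [Node d []]}"

lemma card_forests_ending_in_leaf:
  assumes "finite D"
  shows "card (forests_ending_in_leaf D (Suc m)) = card D ^ Suc m * catalan m"
proof -
  have "forests_ending_in_leaf D (Suc m) = (\<lambda>(K, d). K @ [Node d []]) ` (forests D m \<times> D)"
    by (auto simp: forests_ending_in_leaf_def forests_def)
  moreover have "inj_on (\<lambda>(K, d). K @ [Node d []]) (forests D m \<times> D)"
    by (auto simp: inj_on_def)
  ultimately show ?thesis
    using assms by (simp add: card_image card_cartesian_product card_forests)
qed

lemma tau_Suc: "tau (Suc m) = catalan m"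
proof -
  have "t \<in> Node () ` forests UNIV m" if "tsize t = Suc m" for t :: "unit ptree"
    using that by (cases t) (auto simp: forests_def)
  then have "{t :: unit ptree. tsize t = Suc m} = Node () ` forests UNIV m"
    by (auto simp: forests_def)
  moreover have "inj_on (Node ()) (forests UNIV m)"
    by (simp add: inj_on_def)
  ultimately have "tau (Suc m) = card (forests (UNIV :: unit set) m)"
    unfolding tau_def by (simp add: card_image)
  then show ?thesis
    by (simp add: card_forests)
qed

section \<open>Triangular linear systems\<close>

lemma solve_row_at_diagonal:
  fixes a :: "'a \<Rightarrow> 'a \<Rightarrow> 'f::field" and x :: "'a \<Rightarrow> 'f"
  assumes "finite W" "F\<^sub>0 \<in> W" "a F\<^sub>0 F\<^sub>0 \<noteq> 0"
  defines "x' \<equiv> x(F\<^sub>0 := - (\<Sum>G\<in>W - {F\<^sub>0}. a F\<^sub>0 G * x G) / a F\<^sub>0 F\<^sub>0)"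
  shows "(\<Sum>G\<in>W. a F\<^sub>0 G * x' G) = 0"
    and "a F F\<^sub>0 = 0 \<Longrightarrow> (\<Sum>G\<in>W. a F G * x' G) = (\<Sum>G\<in>W. a F G * x G)"
proof -
  have "(\<Sum>G\<in>W. a F\<^sub>0 G * x' G) = a F\<^sub>0 F\<^sub>0 * x' F\<^sub>0 + (\<Sum>G\<in>W - {F\<^sub>0}. a F\<^sub>0 G * x G)"
    using assms(1,2) by (simp add: sum.remove x'_def)
  then show "(\<Sum>G\<in>W. a F\<^sub>0 G * x' G) = 0"
    using assms(3) by (simp add: x'_def)
  show "(\<Sum>G\<in>W. a F G * x' G) = (\<Sum>G\<in>W. a F G * x G)" if "a F F\<^sub>0 = 0"
    using that by (intro sum.cong) (auto simp: x'_def)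
qed

text \<open>Rows are solved in order of increasing rank: the unknown \<open>x F\<^sub>0\<close> of a row of maximal
  rank occurs in no other row, so it can be adjusted to solve its own row.\<close>

lemma triangular_system_solvable:
  fixes a :: "'a \<Rightarrow> 'a \<Rightarrow> 'f::field" and rank :: "'a \<Rightarrow> nat"
  assumes W: "finite W" "N \<subseteq> W"
    and diag: "\<And>F. F \<in> N \<Longrightarrow> a F F \<noteq> 0"
    and lower: "\<And>F G. F \<in> N \<Longrightarrow> G \<in> W \<Longrightarrow> G \<noteq> F \<Longrightarrow> a F G \<noteq> 0 \<Longrightarrow> rank G < rank F"
  shows "\<exists>x. (\<forall>G. G \<notin> N \<longrightarrow> x G = y G) \<and> (\<forall>F\<in>N. (\<Sum>G\<in>W. a F G * x G) = 0)"
proof -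
  have "S \<subseteq> N \<longrightarrow> (\<exists>x. (\<forall>G. G \<notin> S \<longrightarrow> x G = y G) \<and> (\<forall>F\<in>S. (\<Sum>G\<in>W. a F G * x G) = 0))"
    if "finite S" for S
    using that
  proof (induction S rule: finite_ranking_induct[where f = rank])
    case (insert F\<^sub>0 S)
    show ?case
    proof
      assume sub: "insert F\<^sub>0 S \<subseteq> N"
      then obtain x where out: "\<forall>G. G \<notin> S \<longrightarrow> x G = y G" and rows: "\<forall>F\<in>S. (\<Sum>G\<in>W. a F G * x G) = 0"
        using insert.IH by auto
      have F\<^sub>0: "F\<^sub>0 \<in> W" "a F\<^sub>0 F\<^sub>0 \<noteq> 0"
        using sub W(2) diag by auto
      have off_diagonal: "a F F\<^sub>0 = 0" if "F \<in> S" "F \<noteq> F\<^sub>0" for F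
        using lower[of F F\<^sub>0] insert.hyps(2)[of F] sub that F\<^sub>0 by force
      define x' where "x' = x(F\<^sub>0 := - (\<Sum>G\<in>W - {F\<^sub>0}. a F\<^sub>0 G * x G) / a F\<^sub>0 F\<^sub>0)"
      have "(\<Sum>G\<in>W. a F G * x' G) = 0" if "F \<in> insert F\<^sub>0 S" for F
        using that rows solve_row_at_diagonal[where a = a and x = x, OF W(1) F\<^sub>0] off_diagonal
        unfolding x'_def by (cases "F = F\<^sub>0") auto
      moreover have "\<forall>G. G \<notin> insert F\<^sub>0 S \<longrightarrow> x' G = y G"
        using out by (simp add: x'_def)
      ultimately show "\<exists>x. (\<forall>G. G \<notin> insert F\<^sub>0 S \<longrightarrow> x G = y G) \<and> (\<forall>F\<in>insert F\<^sub>0 S. (\<Sum>G\<in>W. a F G * x G) = 0)"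
        by blast
    qed
  qed auto
  moreover have "finite N"
    using finite_subset[OF W(2,1)] .
  ultimately show ?thesis
    by blast
qed

lemma triangular_system_unique:
  fixes a :: "'a \<Rightarrow> 'a \<Rightarrow> 'f::field" and rank :: "'a \<Rightarrow> nat"
  assumes W: "finite W" "N \<subseteq> W"
    and diag: "\<And>F. F \<in> N \<Longrightarrow> a F F \<noteq> 0"
    and lower: "\<And>F G. F \<in> N \<Longrightarrow> G \<in> W \<Longrightarrow> G \<noteq> F \<Longrightarrow> a F G \<noteq> 0 \<Longrightarrow> rank G < rank F"
    and supp: "\<And>G. G \<notin> N \<Longrightarrow> x G = 0"
    and rows: "\<And>F. F \<in> N \<Longrightarrow> (\<Sum>G\<in>W. a F G * x G) = 0"
  shows "x G = 0"
proof (rule ccontr)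
  assume "x G \<noteq> 0"
  then obtain F where F: "x F \<noteq> 0" and min: "\<And>F'. x F' \<noteq> 0 \<Longrightarrow> rank F \<le> rank F'"
    using ex_has_least_nat[of "\<lambda>F. x F \<noteq> 0" G rank] by blast
  have "F \<in> N"
    using supp F by blast
  have "(\<Sum>G\<in>W - {F}. a F G * x G) = 0"
    using lower[OF \<open>F \<in> N\<close>] min by (intro sum.neutral) (metis DiffE insertI1 leD mult_eq_0_iff)
  then have "a F F * x F = 0"
    using rows[OF \<open>F \<in> N\<close>] sum.remove[OF W(1), of F "\<lambda>G. a F G * x G"] \<open>F \<in> N\<close> W(2) by auto
  then show False
    using diag[OF \<open>F \<in> N\<close>] F by simp
qed

lemma lookup_qscale [simp]: "Poly_Mapping.lookup (qscale c p) k = c * Poly_Mapping.lookup p k"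
  unfolding qscale_def map.rep_eq by (simp add: when_def)

lemma vector_space_qscale: "vector_space (qscale :: rat \<Rightarrow> ('a \<Rightarrow>\<^sub>0 rat) \<Rightarrow> ('a \<Rightarrow>\<^sub>0 rat))"
  by unfold_locales (auto intro!: poly_mapping_eqI simp: lookup_add algebra_simps)

lemma dim_eq_card_if_coordinates:
  fixes S :: "('a \<Rightarrow>\<^sub>0 rat) set" and b :: "'a \<Rightarrow> 'a \<Rightarrow>\<^sub>0 rat"
  assumes S: "module.subspace qscale S" and E: "finite E"
    and b: "\<And>e. e \<in> E \<Longrightarrow> b e \<in> S"
    and coord: "\<And>e e'. e \<in> E \<Longrightarrow> e' \<in> E \<Longrightarrow> Poly_Mapping.lookup (b e) e' = (if e' = e then 1 else 0)"
    and determined: "\<And>p. p \<in> S \<Longrightarrow> (\<And>e. e \<in> E \<Longrightarrow> Poly_Mapping.lookup p e = 0) \<Longrightarrow> p = 0"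
  shows "vector_space.dim qscale S = card E"
proof -
  interpret V: vector_space "qscale :: rat \<Rightarrow> ('a \<Rightarrow>\<^sub>0 rat) \<Rightarrow> ('a \<Rightarrow>\<^sub>0 rat)"
    by (rule vector_space_qscale)
  have coeff: "Poly_Mapping.lookup (\<Sum>e\<in>E. qscale (f e) (b e)) e' = f e'" if "e' \<in> E" for f e'
    using that E by (simp add: lookup_sum coord if_distrib cong: if_cong)
  have inj: "inj_on b E"
    by (rule inj_onI) (metis coord zero_neq_one)
  have expand: "p = (\<Sum>e\<in>E. qscale (Poly_Mapping.lookup p e) (b e))" if "p \<in> S" for p
  proof -
    have "p - (\<Sum>e\<in>E. qscale (Poly_Mapping.lookup p e) (b e)) \<in> S"
      using S that b by (intro V.subspace_diff V.subspace_sum V.subspace_scale) auto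
    moreover have "Poly_Mapping.lookup (p - (\<Sum>e\<in>E. qscale (Poly_Mapping.lookup p e) (b e))) e = 0" if "e \<in> E" for e
      using that by (simp add: lookup_minus coeff)
    ultimately show ?thesis
      using determined by fastforce
  qed
  have "V.independent (b ` E)"
  proof (rule V.independent_if_scalars_zero)
    fix f v assume sum0: "(\<Sum>v\<in>b ` E. qscale (f v) v) = 0" and "v \<in> b ` E"
    then obtain e where "e \<in> E" "v = b e"
      by blast
    have "(\<Sum>e\<in>E. qscale (f (b e)) (b e)) = 0"
      using sum0 by (simp add: sum.reindex[OF inj])
    then show "f v = 0"
      using coeff[of e "\<lambda>e. f (b e)"] \<open>e \<in> E\<close> \<open>v = b e\<close> by simp
  qed (use E in simp)
  moreover have "S \<subseteq> V.span (b ` E)"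
  proof
    fix p assume "p \<in> S"
    have "(\<Sum>e\<in>E. qscale (Poly_Mapping.lookup p e) (b e)) \<in> V.span (b ` E)"
      by (intro V.span_sum V.span_scale V.span_base) auto
    then show "p \<in> V.span (b ` E)"
      using expand[OF \<open>p \<in> S\<close>] by simp
  qed
  ultimately have "card (b ` E) = V.dim S"
    using b by (intro V.basis_card_eq_dim) auto
  then show ?thesis
    using card_image[OF inj] by simp
qed

section \<open>The leading tensor of a forest\<close>

definition leading_tensor :: "'d pforest \<Rightarrow> 'd pforest \<times> 'd pforest" where
  "leading_tensor F = (case last F of Node d C \<Rightarrow> (C, butlast F @ [Node d []]))"

lemma leading_tensor_snoc [simp]: "leading_tensor (K @ [Node d C]) = (C, K @ [Node d []])"
  by (simp add: leading_tensor_def)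

lemma leading_tensor_in_Delta: "leading_tensor F \<in># Delta F" if "F \<noteq> []"
proof -
  obtain K d C where F: "F = K @ [Node d C]"
    using \<open>F \<noteq> []\<close> by (metis rev_exhaust ptree.exhaust)
  have "(C, [Node d []]) \<in># Delta_tree (Node d C)"
    using mem_Delta_right_Nil_iff[of C C] by auto
  then show ?thesis
    unfolding F Delta_append mem_tensor_mult using mem_Delta_left_Nil_iff[of K K] by fastforce
qed

definition last_tree_size :: "'d pforest \<Rightarrow> nat" where
  "last_tree_size Y = (if Y = [] then 0 else tsize (last Y))"

text \<open>Among forests of equal weight, more trees or, with equally many, a smaller last tree give a
  smaller rank, since the factor \<open>fweight Y + 1\<close> exceeds \<open>last_tree_size Y \<le> fweight Y\<close>.\<close>

definition forest_rank :: "'d pforest \<Rightarrow> nat" where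
  "forest_rank Y = (fweight Y - length Y) * (fweight Y + 1) + last_tree_size Y"

lemma last_tree_size_le_fweight: "last_tree_size F \<le> fweight F"
  by (cases F rule: rev_cases) (simp_all add: last_tree_size_def)

lemma forest_rank_less:
  assumes weight: "fweight Y = fweight F"
    and less: "length F < length Y \<or> (length Y = length F \<and> last_tree_size Y < last_tree_size F)"
  shows "forest_rank Y < forest_rank F"
proof (cases "length F < length Y")
  case True
  define w where "w = fweight F"
  have "length Y \<le> w" "last_tree_size Y \<le> w"
    using length_le_fweight[of Y] last_tree_size_le_fweight[of Y] weight by (simp_all add: w_def)
  then have "forest_rank Y \<le> (w - length Y) * (w + 1) + w"
    using weight by (simp add: forest_rank_def w_def)
  also have "\<dots> < (w - length F) * (w + 1)"
  proof -
    have "(w - length Y + 1) * (w + 1) \<le> (w - length F) * (w + 1)"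
      using True \<open>length Y \<le> w\<close> by (intro mult_right_mono) simp_all
    then show ?thesis
      by simp
  qed
  also have "\<dots> \<le> forest_rank F"
    by (simp add: forest_rank_def w_def)
  finally show ?thesis .
next
  case False
  then show ?thesis
    using less weight by (simp add: forest_rank_def)
qed

text \<open>If \<open>C \<otimes> K \<bullet>\<^sub>d\<close> occurs in \<open>\<Delta>(Y)\<close>, then \<open>Y\<close> has at least as many trees as \<open>K B\<^sub>d(C)\<close>;
  if it has equally many, its last tree is \<open>B\<^sub>d(G)\<close> for a suffix \<open>G\<close> of \<open>C\<close>, proper unless
  \<open>Y = K B\<^sub>d(C)\<close>.\<close>

lemma leading_tensor_in_Delta_shape:
  assumes mem: "(C, K @ [Node d []]) \<in># Delta Y" and ne: "Y \<noteq> K @ [Node d C]"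
  shows "Suc (length K) < length Y \<or> (length Y = Suc (length K) \<and> last_tree_size Y < Suc (fweight C))"
proof -
  have ge: "Suc (length K) \<le> length Y"
    using mem_Delta(2)[OF mem] by simp
  show ?thesis
  proof (cases "length Y = Suc (length K)")
    case True
    then obtain Y' e G where Y: "Y = Y' @ [Node e G]" and len: "length Y' = length K"
      by (metis length_Suc_conv_rev ptree.exhaust)
    have "(C, K @ [Node d []]) \<in># tensor_mult (Delta Y') (Delta_tree (Node e G))"
      using mem unfolding Y Delta_append by (simp del: Delta_tree.simps)
    then obtain P1 R1 P2 R2 where mem1: "(P1, R1) \<in># Delta Y'" and mem2: "(P2, R2) \<in># Delta_tree (Node e G)"
      and C: "C = P1 @ P2" and R: "K @ [Node d []] = R1 @ R2"
      unfolding mem_tensor_mult by blast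
    have "length R1 \<le> length K" "length R2 \<le> 1"
      using mem_Delta(1)[OF mem2] mem_Delta(2)[OF mem1] len by simp_all
    moreover have "length R1 + length R2 = Suc (length K)"
      using arg_cong[OF R, of length] by simp
    ultimately have "length R1 = length K"
      by linarith
    with R have "R1 = K" "R2 = [Node d []]"
      by (auto simp: append_eq_append_conv)
    with mem2 have "P2 = G" "e = d"
      by (auto simp: mem_Delta_right_Nil_iff)
    have "P1 \<noteq> []"
    proof
      assume "P1 = []"
      then have "Y' = K"
        using mem1 \<open>R1 = K\<close> by (simp add: mem_Delta_left_Nil_iff)
      then show False
        using ne Y C \<open>P1 = []\<close> \<open>P2 = G\<close> \<open>e = d\<close> by simp
    qed
    then have "last_tree_size Y < Suc (fweight C)"
      using Y C \<open>P2 = G\<close> by (simp add: last_tree_size_def zero_less_iff_neq_zero)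
    then show ?thesis
      using True by simp
  qed (use ge in simp)
qed

lemma forest_rank_less_if_leading_tensor_in_Delta:
  assumes "leading_tensor F \<in># Delta Y" "Y \<noteq> F" "F \<noteq> []"
  shows "forest_rank Y < forest_rank F"
proof -
  obtain K d C where F: "F = K @ [Node d C]"
    using \<open>F \<noteq> []\<close> by (metis rev_exhaust ptree.exhaust)
  show ?thesis
  proof (rule forest_rank_less)
    show "fweight Y = fweight F"
      using mem_Delta(2)[OF assms(1)[unfolded F leading_tensor_snoc]] F by simp
    have "Y \<noteq> []"
      using assms(1) by (auto simp: F)
    then show "length F < length Y \<or> (length Y = length F \<and> last_tree_size Y < last_tree_size F)"
      using leading_tensor_in_Delta_shape[of C K d Y] assms unfolding F by (simp add: last_tree_size_def)
  qed
qed

section \<open>Primitive elements\<close>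

definition Delta_coeff :: "'d pforest set \<Rightarrow> ('d pforest \<Rightarrow> rat) \<Rightarrow> 'd pforest \<Rightarrow> 'd pforest \<Rightarrow> rat" where
  "Delta_coeff W x A B = (\<Sum>G\<in>W. of_nat (count (Delta G) (A, B)) * x G)"

lemma in_HD_homogeneous_iff: "in_HD D p \<and> homogeneous n p \<longleftrightarrow> Poly_Mapping.keys p \<subseteq> forests D n"
  unfolding in_HD_def homogeneous_def forests_def fdecs_def by auto

lemma coprod_eq_Delta_coeff:
  assumes "finite D" "Poly_Mapping.keys p \<subseteq> forests D n"
  shows "coprod p A B = Delta_coeff (forests D n) (Poly_Mapping.lookup p) A B"
  unfolding coprod_def Delta_coeff_def coprod_coeff_eq_count_Delta
  by (rule sum.mono_neutral_cong_left) (use assms in \<open>auto simp: finite_forests in_keys_iff\<close>)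

lemma Delta_coeff_eq_0:
  assumes "\<not> (fweight A + fweight B = n \<and> fdecs A \<union> fdecs B \<subseteq> D)"
  shows "Delta_coeff (forests D n) x A B = 0"
  unfolding Delta_coeff_def
proof (rule sum.neutral, rule ballI)
  fix G assume "G \<in> forests D n"
  then have "(A, B) \<notin># Delta G"
    using assms mem_Delta(2)[of A B G] by (auto simp: forests_def)
  then show "of_nat (count (Delta G) (A, B)) * x G = 0"
    by (simp add: not_in_iff)
qed

lemma Delta_coeff_right_Nil:
  assumes "finite W" "Poly_Mapping.keys p \<subseteq> W"
  shows "Delta_coeff W (Poly_Mapping.lookup p) A [] = Poly_Mapping.lookup p A"
proof -
  have "Delta_coeff W (Poly_Mapping.lookup p) A [] = (\<Sum>G\<in>W. if G = A then Poly_Mapping.lookup p G else 0)"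
    unfolding Delta_coeff_def count_Delta_right_Nil by (rule sum.cong) auto
  also have "\<dots> = Poly_Mapping.lookup p A"
    using assms by (cases "A \<in> W") (auto simp: in_keys_iff)
  finally show ?thesis .
qed

lemma Delta_coeff_left_Nil:
  assumes "finite W" "Poly_Mapping.keys p \<subseteq> W"
  shows "Delta_coeff W (Poly_Mapping.lookup p) [] B = Poly_Mapping.lookup p B"
proof -
  have "Delta_coeff W (Poly_Mapping.lookup p) [] B = (\<Sum>G\<in>W. if G = B then Poly_Mapping.lookup p G else 0)"
    unfolding Delta_coeff_def count_Delta_left_Nil by (rule sum.cong) auto
  also have "\<dots> = Poly_Mapping.lookup p B"
    using assms by (cases "B \<in> W") (auto simp: in_keys_iff)
  finally show ?thesis .
qed

lemma prim_space_iff: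
  fixes D :: "'d set"
  assumes "finite D" "n \<ge> 1"
  shows "p \<in> prim_space D n \<longleftrightarrow> Poly_Mapping.keys p \<subseteq> forests D n \<and>
     (\<forall>A B. A \<noteq> [] \<longrightarrow> B \<noteq> [] \<longrightarrow> Delta_coeff (forests D n) (Poly_Mapping.lookup p) A B = 0)"
proof -
  have "primitive p \<longleftrightarrow> (\<forall>A B. A \<noteq> [] \<longrightarrow> B \<noteq> [] \<longrightarrow> Delta_coeff (forests D n) (Poly_Mapping.lookup p) A B = 0)"
    if keys: "Poly_Mapping.keys p \<subseteq> forests D n"
  proof -
    let ?\<Phi> = "Delta_coeff (forests D n) (Poly_Mapping.lookup p)"
    have "[] \<notin> forests D n"
      using assms(2) by (simp add: forests_def)
    then have unit: "Poly_Mapping.lookup p [] = 0"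
      using keys by (auto simp: in_keys_iff)
    have counit: "?\<Phi> A [] = Poly_Mapping.lookup p A" "?\<Phi> [] A = Poly_Mapping.lookup p A" for A
      using Delta_coeff_right_Nil[OF finite_forests[OF assms(1)] keys]
        Delta_coeff_left_Nil[OF finite_forests[OF assms(1)] keys] by this+
    show ?thesis
      unfolding primitive_def coprod_eq_Delta_coeff[OF assms(1) keys]
    proof (intro iffI allI impI)
      fix A B :: "'d pforest"
      assume "\<forall>A B. ?\<Phi> A B = (if B = [] then Poly_Mapping.lookup p A else 0) + (if A = [] then Poly_Mapping.lookup p B else 0)"
        and "A \<noteq> []" "B \<noteq> []"
      then show "?\<Phi> A B = 0"
        by simp
    next
      fix A B :: "'d pforest"
      assume "\<forall>A B. A \<noteq> [] \<longrightarrow> B \<noteq> [] \<longrightarrow> ?\<Phi> A B = 0"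
      then show "?\<Phi> A B = (if B = [] then Poly_Mapping.lookup p A else 0) + (if A = [] then Poly_Mapping.lookup p B else 0)"
        using unit counit by (cases "A = []"; cases "B = []") simp_all
    qed
  qed
  moreover have "p \<in> prim_space D n \<longleftrightarrow> Poly_Mapping.keys p \<subseteq> forests D n \<and> primitive p"
    unfolding prim_space_def mem_Collect_eq conj_assoc[symmetric] in_HD_homogeneous_iff ..
  ultimately show ?thesis
    by (cases "Poly_Mapping.keys p \<subseteq> forests D n") simp_all
qed

definition forests_upto :: "'d set \<Rightarrow> nat \<Rightarrow> 'd pforest set" where
  "forests_upto D n = {F. fweight F \<le> n \<and> fdecs F \<subseteq> D}"

lemma finite_forests_upto: "finite D \<Longrightarrow> finite (forests_upto D n)"
proof -
  assume "finite D"
  moreover have "forests_upto D n = (\<Union>m\<le>n. forests D m)"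
    by (auto simp: forests_upto_def forests_def)
  ultimately show ?thesis
    by (simp add: finite_forests)
qed

lemma mem_Delta_forests_upto:
  assumes "G \<in> forests D n" "(P, R) \<in># Delta G"
  shows "P \<in> forests_upto D n" "R \<in> forests_upto D n"
  using assms mem_Delta(2)[OF assms(2)] by (auto simp: forests_def forests_upto_def)

lemma Delta_coeff_coassoc:
  assumes "finite D"
  shows "(\<Sum>P\<in>forests_upto D n. of_nat (count (Delta P) (A, C)) * Delta_coeff (forests D n) x P Z)
       = (\<Sum>Y\<in>forests_upto D n. of_nat (count (Delta Y) (C, Z)) * Delta_coeff (forests D n) x A Y)"
proof -
  let ?T = "forests_upto D n" and ?W = "forests D n"
  have T: "finite ?T"
    using assms by (rule finite_forests_upto)
  have "(\<Sum>P\<in>?T. of_nat (count (Delta P) (A, C)) * Delta_coeff ?W x P Z)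
      = (\<Sum>G\<in>?W. of_nat (\<Sum>P\<in>?T. count (Delta P) (A, C) * count (Delta G) (P, Z)) * x G)"
    unfolding Delta_coeff_def of_nat_sum of_nat_mult sum_distrib_left sum_distrib_right
    by (subst sum.swap) (simp add: mult_ac)
  also have "\<dots> = (\<Sum>G\<in>?W. of_nat (count (Delta_tensor_id G) (A, C, Z)) * x G)"
    using count_Delta_tensor_id[OF T mem_Delta_forests_upto(1)] by (intro sum.cong) simp_all
  also have "\<dots> = (\<Sum>G\<in>?W. of_nat (count (id_tensor_Delta G) (A, C, Z)) * x G)"
    by (simp add: Delta_coassoc(2))
  also have "\<dots> = (\<Sum>G\<in>?W. of_nat (\<Sum>Y\<in>?T. count (Delta G) (A, Y) * count (Delta Y) (C, Z)) * x G)"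
    using count_id_tensor_Delta[OF T mem_Delta_forests_upto(2)] by (intro sum.cong) simp_all
  also have "\<dots> = (\<Sum>Y\<in>?T. of_nat (count (Delta Y) (C, Z)) * Delta_coeff ?W x A Y)"
    unfolding Delta_coeff_def of_nat_sum of_nat_mult sum_distrib_left sum_distrib_right
    by (subst sum.swap) (simp add: mult_ac)
  finally show ?thesis .
qed

lemma not_ending_in_leafE:
  assumes "F \<in> forests D n - forests_ending_in_leaf D n" "n \<ge> 1"
  obtains K d C where "C \<noteq> []" "F = K @ [Node d C]"
proof -
  have "F \<noteq> []"
    using assms by (auto simp: forests_def)
  then obtain K t where "F = K @ [t]"
    by (cases F rule: rev_cases) auto
  moreover obtain d C where "t = Node d C"
    by (cases t)
  ultimately show ?thesis
    using that assms by (cases "C = []") (auto simp: forests_ending_in_leaf_def)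
qed

lemma Delta_coeff_leaf_eq_0:
  assumes leading: "\<And>F. F \<in> forests D n - forests_ending_in_leaf D n \<Longrightarrow>
      case_prod (Delta_coeff (forests D n) x) (leading_tensor F) = 0"
    and "A \<noteq> []"
  shows "Delta_coeff (forests D n) x A (K @ [Node d []]) = 0"
proof (cases "K @ [Node d A] \<in> forests D n")
  case True
  then have "K @ [Node d A] \<in> forests D n - forests_ending_in_leaf D n"
    using \<open>A \<noteq> []\<close> by (auto simp: forests_ending_in_leaf_def)
  then show ?thesis
    using leading by fastforce
next
  case False
  then show ?thesis
    by (intro Delta_coeff_eq_0) (auto simp: forests_def)
qed

lemma sum_count_mult_eq_single:
  fixes f :: "'a \<Rightarrow> rat"
  assumes "finite T" "B \<in> T" "\<And>Y. Y \<in> T \<Longrightarrow> Y \<noteq> B \<Longrightarrow> x \<in># M Y \<Longrightarrow> f Y = 0"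
  shows "(\<Sum>Y\<in>T. of_nat (count (M Y) x) * f Y) = of_nat (count (M B) x) * f B"
proof -
  have "(\<Sum>Y\<in>T - {B}. of_nat (count (M Y) x) * f Y) = 0"
  proof (rule sum.neutral, rule ballI)
    fix Y assume "Y \<in> T - {B}"
    then show "of_nat (count (M Y) x) * f Y = 0"
      using assms(3) by (cases "x \<in># M Y") (simp_all add: not_in_iff)
  qed
  then show ?thesis
    using sum.remove[OF assms(1,2), of "\<lambda>Y. of_nat (count (M Y) x) * f Y"] by simp
qed

text \<open>Coassociativity propagates the vanishing of the leading coefficients to all coefficients
  \<open>A \<otimes> B\<close> with \<open>A, B \<noteq> 1\<close>, by induction on the rank of \<open>B\<close>.\<close>

lemma Delta_coeff_eq_0_if_leading:
  assumes "finite D"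
    and leading: "\<And>F. F \<in> forests D n - forests_ending_in_leaf D n \<Longrightarrow>
      case_prod (Delta_coeff (forests D n) x) (leading_tensor F) = 0"
    and "A \<noteq> []" "B \<noteq> []"
  shows "Delta_coeff (forests D n) x A B = 0"
  using assms(3,4)
proof (induction B arbitrary: A rule: measure_induct_rule[of forest_rank])
  case (less B)
  let ?T = "forests_upto D n" and ?\<Phi> = "Delta_coeff (forests D n) x"
  obtain K d C where B: "B = K @ [Node d C]"
    using \<open>B \<noteq> []\<close> by (metis rev_exhaust ptree.exhaust)
  let ?Z = "K @ [Node d []]"
  consider "C = []" | "B \<notin> ?T" | "C \<noteq> []" "B \<in> ?T"
    by blast
  then show ?case
  proof cases
    case 1
    then show ?thesis
      using Delta_coeff_leaf_eq_0[OF leading less.prems(1)] B by simp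
  next
    case 2
    then show ?thesis
      by (intro Delta_coeff_eq_0) (auto simp: forests_upto_def)
  next
    case 3
    have "of_nat (count (Delta P) (A, C)) * ?\<Phi> P ?Z = 0" for P
      using \<open>A \<noteq> []\<close> Delta_coeff_leaf_eq_0[OF leading] by (cases "P = []") auto
    then have "(\<Sum>P\<in>?T. of_nat (count (Delta P) (A, C)) * ?\<Phi> P ?Z) = 0"
      by (intro sum.neutral) blast
    moreover have "(\<Sum>Y\<in>?T. of_nat (count (Delta Y) (C, ?Z)) * ?\<Phi> A Y) = of_nat (count (Delta B) (C, ?Z)) * ?\<Phi> A B"
    proof (rule sum_count_mult_eq_single[OF finite_forests_upto[OF assms(1)]])
      show "B \<in> ?T"
        using 3 by blast
      show "?\<Phi> A Y = 0" if "Y \<in> ?T" "Y \<noteq> B" "(C, ?Z) \<in># Delta Y" for Y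
      proof (rule less.IH)
        show "forest_rank Y < forest_rank B"
          using forest_rank_less_if_leading_tensor_in_Delta[of B Y] that B by simp
        show "Y \<noteq> []"
          using that(3) by auto
      qed (rule \<open>A \<noteq> []\<close>)
    qed
    moreover have "count (Delta B) (C, ?Z) \<noteq> 0"
      using leading_tensor_in_Delta[of B] B by simp
    ultimately show ?thesis
      using Delta_coeff_coassoc[OF assms(1), where A = A and C = C and x = x and Z = ?Z and n = n] by simp
  qed
qed

lemma prim_space_iff_leading:
  assumes "finite D" "n \<ge> 1"
  shows "p \<in> prim_space D n \<longleftrightarrow> Poly_Mapping.keys p \<subseteq> forests D n \<and>
     (\<forall>F \<in> forests D n - forests_ending_in_leaf D n.
        case_prod (Delta_coeff (forests D n) (Poly_Mapping.lookup p)) (leading_tensor F) = 0)"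
proof -
  let ?\<Phi> = "Delta_coeff (forests D n) (Poly_Mapping.lookup p)"
  have "(\<forall>A B. A \<noteq> [] \<longrightarrow> B \<noteq> [] \<longrightarrow> ?\<Phi> A B = 0) \<longleftrightarrow>
      (\<forall>F \<in> forests D n - forests_ending_in_leaf D n. case_prod ?\<Phi> (leading_tensor F) = 0)"
  proof
    assume all: "\<forall>A B. A \<noteq> [] \<longrightarrow> B \<noteq> [] \<longrightarrow> ?\<Phi> A B = 0"
    show "\<forall>F \<in> forests D n - forests_ending_in_leaf D n. case_prod ?\<Phi> (leading_tensor F) = 0"
    proof
      fix F assume "F \<in> forests D n - forests_ending_in_leaf D n"
      then obtain K d C where "C \<noteq> []" "F = K @ [Node d C]"
        using assms(2) by (rule not_ending_in_leafE)
      then show "case_prod ?\<Phi> (leading_tensor F) = 0"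
        using all by simp
    qed
  next
    assume "\<forall>F \<in> forests D n - forests_ending_in_leaf D n. case_prod ?\<Phi> (leading_tensor F) = 0"
    then show "\<forall>A B. A \<noteq> [] \<longrightarrow> B \<noteq> [] \<longrightarrow> ?\<Phi> A B = 0"
      using Delta_coeff_eq_0_if_leading[OF assms(1)] by blast
  qed
  then show ?thesis
    unfolding prim_space_iff[OF assms] by simp
qed

lemma Delta_coeff_lookup_add:
  "Delta_coeff W (Poly_Mapping.lookup (p + q)) A B =
    Delta_coeff W (Poly_Mapping.lookup p) A B + Delta_coeff W (Poly_Mapping.lookup q) A B"
  by (simp add: Delta_coeff_def lookup_add distrib_left sum.distrib)

lemma Delta_coeff_lookup_qscale:
  "Delta_coeff W (Poly_Mapping.lookup (qscale c p)) A B = c * Delta_coeff W (Poly_Mapping.lookup p) A B"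
  by (simp add: Delta_coeff_def sum_distrib_left mult_ac)

lemma subspace_prim_space:
  fixes D :: "'d set"
  assumes "finite D" "n \<ge> 1"
  shows "module.subspace qscale (prim_space D n)"
proof -
  interpret V: vector_space "qscale :: rat \<Rightarrow> ('d pforest \<Rightarrow>\<^sub>0 rat) \<Rightarrow> ('d pforest \<Rightarrow>\<^sub>0 rat)"
    by (rule vector_space_qscale)
  have keys_qscale: "Poly_Mapping.keys (qscale c p) \<subseteq> Poly_Mapping.keys p" for c and p :: "'d pforest \<Rightarrow>\<^sub>0 rat"
    by (auto simp: in_keys_iff)
  show ?thesis
    unfolding V.subspace_def
  proof (intro conjI ballI allI)
    show "0 \<in> prim_space D n"
      unfolding prim_space_iff[OF assms] by (simp add: Delta_coeff_def)
  next
    fix p q assume "p \<in> prim_space D n" "q \<in> prim_space D n"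
    then show "p + q \<in> prim_space D n"
      unfolding prim_space_iff[OF assms] using keys_add[of p q] by (auto simp: Delta_coeff_lookup_add)
  next
    fix c p assume "p \<in> prim_space D n"
    then show "qscale c p \<in> prim_space D n"
      unfolding prim_space_iff[OF assms] using keys_qscale[of c p] by (auto simp: Delta_coeff_lookup_qscale)
  qed
qed

definition leading_matrix :: "'d pforest \<Rightarrow> 'd pforest \<Rightarrow> rat" where
  "leading_matrix F G = of_nat (count (Delta G) (leading_tensor F))"

lemma leading_matrix_triangular:
  assumes "F \<in> forests D n - forests_ending_in_leaf D n" "n \<ge> 1"
  shows "leading_matrix F F \<noteq> 0"
    and "G \<noteq> F \<Longrightarrow> leading_matrix F G \<noteq> 0 \<Longrightarrow> forest_rank G < forest_rank F"
proof -
  have "F \<noteq> []"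
    using assms by (auto simp: forests_def)
  then show "leading_matrix F F \<noteq> 0"
    using leading_tensor_in_Delta by (simp add: leading_matrix_def)
  show "forest_rank G < forest_rank F" if "G \<noteq> F" "leading_matrix F G \<noteq> 0"
    using forest_rank_less_if_leading_tensor_in_Delta that \<open>F \<noteq> []\<close> by (simp add: leading_matrix_def)
qed

lemma prim_space_iff_leading_matrix:
  assumes "finite D" "n \<ge> 1"
  shows "p \<in> prim_space D n \<longleftrightarrow> Poly_Mapping.keys p \<subseteq> forests D n \<and>
     (\<forall>F \<in> forests D n - forests_ending_in_leaf D n.
        (\<Sum>G\<in>forests D n. leading_matrix F G * Poly_Mapping.lookup p G) = 0)"
  unfolding prim_space_iff_leading[OF assms]
  by (simp add: Delta_coeff_def leading_matrix_def case_prod_beta)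

lemma prim_space_eq_0_if_leaf_coeffs_eq_0:
  assumes D: "finite D" and n: "n \<ge> 1" and p: "p \<in> prim_space D n"
    and zero: "\<And>e. e \<in> forests_ending_in_leaf D n \<Longrightarrow> Poly_Mapping.lookup p e = 0"
  shows "p = 0"
proof (rule poly_mapping_eqI)
  fix G
  let ?W = "forests D n" and ?N = "forests D n - forests_ending_in_leaf D n"
  have keys: "Poly_Mapping.keys p \<subseteq> ?W"
    and rows: "\<And>F. F \<in> ?N \<Longrightarrow> (\<Sum>G\<in>?W. leading_matrix F G * Poly_Mapping.lookup p G) = 0"
    using p unfolding prim_space_iff_leading_matrix[OF D n] by auto
  have outside: "Poly_Mapping.lookup p G = 0" if "G \<notin> ?N" for G
    using that zero keys by (auto simp: in_keys_iff)
  have "Poly_Mapping.lookup p G = 0"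
    by (rule triangular_system_unique[where rank = forest_rank and a = leading_matrix and N = ?N,
          OF finite_forests[OF D] Diff_subset])
      (simp_all add: leading_matrix_triangular[OF _ n] outside rows)
  then show "Poly_Mapping.lookup p G = Poly_Mapping.lookup 0 G"
    by simp
qed

lemma prim_space_leaf_coordinate_vector:
  assumes D: "finite D" and n: "n \<ge> 1" and e: "e \<in> forests_ending_in_leaf D n"
  obtains b where "b \<in> prim_space D n"
    and "\<And>e'. e' \<in> forests_ending_in_leaf D n \<Longrightarrow> Poly_Mapping.lookup b e' = (if e' = e then 1 else 0)"
proof -
  let ?W = "forests D n" and ?N = "forests D n - forests_ending_in_leaf D n"
  have "\<exists>x. (\<forall>G. G \<notin> ?N \<longrightarrow> x G = (if G = e then 1 else 0)) \<and>
      (\<forall>F\<in>?N. (\<Sum>G\<in>?W. leading_matrix F G * x G) = 0)"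
    by (rule triangular_system_solvable[where rank = forest_rank and a = leading_matrix,
          OF finite_forests[OF D] Diff_subset]) (simp_all add: leading_matrix_triangular[OF _ n])
  then obtain x where out: "\<And>G. G \<notin> ?N \<Longrightarrow> x G = (if G = e then 1 else 0)"
    and rows: "\<And>F. F \<in> ?N \<Longrightarrow> (\<Sum>G\<in>?W. leading_matrix F G * x G) = 0"
    by blast
  have "e \<in> ?W"
    using e by (simp add: forests_ending_in_leaf_def)
  then have supp: "{G. x G \<noteq> 0} \<subseteq> ?W"
    using out by (force split: if_splits)
  then have lookup: "Poly_Mapping.lookup (Abs_poly_mapping x) = x"
    using finite_forests[OF D] by (intro lookup_Abs_poly_mapping) (rule finite_subset)
  show ?thesis
  proof
    show "Abs_poly_mapping x \<in> prim_space D n"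
      unfolding prim_space_iff_leading_matrix[OF D n] lookup using supp rows by (auto simp: in_keys_iff lookup)
  qed (use out in \<open>simp add: lookup\<close>)
qed

theorem prim_dim_eq_card_forests_ending_in_leaf:
  fixes D :: "'d set"
  assumes D: "finite D" and n: "n \<ge> 1"
  shows "prim_dim D n = card (forests_ending_in_leaf D n)"
proof -
  let ?E = "forests_ending_in_leaf D n"
  have "\<forall>e\<in>?E. \<exists>b. b \<in> prim_space D n \<and> (\<forall>e'\<in>?E. Poly_Mapping.lookup b e' = (if e' = e then 1 else 0))"
    using prim_space_leaf_coordinate_vector[OF D n] by metis
  then obtain b where b: "\<And>e. e \<in> ?E \<Longrightarrow> b e \<in> prim_space D n"
    and coord: "\<And>e e'. e \<in> ?E \<Longrightarrow> e' \<in> ?E \<Longrightarrow> Poly_Mapping.lookup (b e) e' = (if e' = e then 1 else 0)"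
    by (metis bchoice)
  have "finite ?E"
    using finite_forests[OF D] by (rule finite_subset[rotated]) (auto simp: forests_ending_in_leaf_def)
  then show ?thesis
    unfolding prim_dim_def
    using subspace_prim_space[OF D n] b coord prim_space_eq_0_if_leaf_coeffs_eq_0[OF D n]
    by (intro dim_eq_card_if_coordinates) auto
qed

lemma prim_dim_0:
  fixes D :: "'d set"
  assumes "finite D"
  shows "prim_dim D 0 = 0"
proof -
  interpret V: vector_space "qscale :: rat \<Rightarrow> ('d pforest \<Rightarrow>\<^sub>0 rat) \<Rightarrow> ('d pforest \<Rightarrow>\<^sub>0 rat)"
    by (rule vector_space_qscale)
  have "p = 0" if "p \<in> prim_space D 0" for p
  proof (rule poly_mapping_eqI)
    have keys: "Poly_Mapping.keys p \<subseteq> {[]}" and "primitive p"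
      using that in_HD_homogeneous_iff[of D p 0] by (auto simp: prim_space_def forests_0)
    then have "coprod p [] [] = 2 * Poly_Mapping.lookup p []"
      by (simp add: primitive_def)
    moreover have "coprod p [] [] = Poly_Mapping.lookup p []"
      using coprod_eq_Delta_coeff[OF assms keys[folded forests_0[of D]]] by (simp add: Delta_coeff_def forests_0)
    ultimately show "Poly_Mapping.lookup p G = Poly_Mapping.lookup 0 G" for G
      using keys by (cases "G = []") (auto simp: in_keys_iff)
  qed
  then have "prim_space D 0 \<subseteq> V.span {}"
    by (auto simp: V.span_empty)
  then show ?thesis
    unfolding prim_dim_def using V.basis_card_eq_dim[of "{}" "prim_space D 0"] V.independent_empty by simp
qed

lemma prim_dim_Suc: "finite D \<Longrightarrow> prim_dim D (Suc m) = card D ^ Suc m * catalan m"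
  by (simp add: prim_dim_eq_card_forests_ending_in_leaf card_forests_ending_in_leaf)

lemma prim_dim_series:
  fixes x :: real
  assumes "finite D" "D \<noteq> {}" "\<bar>x\<bar> < 1 / (4 * real (card D))"
  shows "(\<lambda>n. real (prim_dim D n) * x ^ n) sums ((1 - sqrt (1 - 4 * real (card D) * x)) / 2)"
proof -
  have "card D > 0"
    using assms(1,2) card_gt_0_iff by blast
  then have "\<bar>real (card D) * x\<bar> < 1/4"
    using assms(3) by (simp add: abs_mult field_simps)
  from catalan_series[OF this]
  have "(\<lambda>n. real (prim_dim D (Suc n)) * x ^ Suc n) sums ((1 - sqrt (1 - 4 * real (card D) * x)) / 2)"
    by (simp add: prim_dim_Suc[OF assms(1)] power_mult_distrib mult_ac)
  then show ?thesis
    using sums_Suc_iff[of "\<lambda>n. real (prim_dim D n) * x ^ n"] by (simp add: prim_dim_0[OF assms(1)])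
qed

theorem proposition64:
  fixes Dset :: "'d set"
  assumes "finite Dset" and "Dset \<noteq> {}"
  shows "(\<forall>x::real. \<bar>x\<bar> < 1 / (4 * real (card Dset)) \<longrightarrow>
           (\<lambda>n. real (prim_dim Dset n) * x ^ n) sums ((1 - sqrt (1 - 4 * real (card Dset) * x)) / 2))
       \<and> (\<forall>n\<ge>1. real (prim_dim Dset n) =
            fact (2 * n - 2) / (fact n * fact (n - 1)) * real (card Dset) ^ n)
       \<and> (\<forall>n\<ge>1. prim_dim Dset n = card Dset ^ n * tau n)"
proof (intro conjI allI impI)
  show "(\<lambda>n. real (prim_dim Dset n) * x ^ n) sums ((1 - sqrt (1 - 4 * real (card Dset) * x)) / 2)"
    if "\<bar>x\<bar> < 1 / (4 * real (card Dset))" for x :: real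
    using assms that by (rule prim_dim_series)
  fix n :: nat
  assume "n \<ge> 1"
  then obtain m where n: "n = Suc m"
    by (cases n) auto
  show "real (prim_dim Dset n) = fact (2 * n - 2) / (fact n * fact (n - 1)) * real (card Dset) ^ n"
    unfolding n by (simp add: prim_dim_Suc[OF assms(1)] catalan_closed_form)
  show "prim_dim Dset n = card Dset ^ n * tau n"
    unfolding n by (simp add: prim_dim_Suc[OF assms(1)] tau_Suc)
qed

end
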